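(* Let $\mathfrak g$ be a finite-dimensional complex Lie superalgebra and let $I^s_+(\mathfrak g)$ be the subspace of $I^s(\mathfrak g)$ of invariant supersymmetric forms with no constant term. Then $s(P)=0$ for all $P\in I^s_+(\mathfrak g)$.
   Context: Elements of $\mathfrak g=\mathfrak g_{\bar0}\oplus\mathfrak g_{\bar1}$ are homogeneous, degrees denoted by lower-case letters. For $\mathcal X=(X_1,\dots,X_k)$, $\sigma\in\mathfrak S_k$, $\epsilon(\sigma,\mathcal X)=(-1)^K$, $K$ the number of pairs $i<j$ with $\sigma(i)>\sigma(j)$ and $X_{\sigma(i)},X_{\sigma(j)}$ odd. A $k$-form $F$ has degree $f$ if $F(X_1,\dots,X_k)\neq0$ only when $x_1+\dots+x_k+f=0$. $\mathcal P(\mathfrak g)$ (resp. $\mathcal A(\mathfrak g)$) is the space of forms of all orders (constants = $0$-forms) with $\epsilon(\sigma,\mathcal X)F(X_{\sigma(1)},\dots)=F(X_1,\dots)$ (resp. $\epsilon(\sigma)\epsilon(\sigma,\mathcal X)F(X_{\sigma(1)},\dots)=F(X_1,\dots)$) for all $\sigma$; products: with $(F\boxtimes G)(X_1,\dots,X_{a+b})=(-1)^{g(x_1+\dots+x_a)}F(X_1,\dots,X_a)G(X_{a+1},\dots)$, $F\cdot G=\frac1{a!b!}\sum_\sigma\epsilon(\sigma,\mathcal X)(F\boxtimes G)(X_{\sigma(1)},\dots)$ and $F\wedge G=\frac1{a!b!}\sum_\sigma\epsilon(\sigma)\epsilon(\sigma,\mathcal X)(F\boxtimes G)(X_{\sigma(1)},\dots)$.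 For $F$ of degree $f$, $L_XF(X_1,\dots,X_k)=-(-1)^{xf}\sum_j(-1)^{x(x_1+\dots+x_{j-1})}F(X_1,\dots,[X,X_j],\dots,X_k)$, and $I^s(\mathfrak g)=\{P\in\mathcal P(\mathfrak g):L_XP=0\ \forall X\in\mathfrak g\}$. The differential $d$ on $\mathcal A(\mathfrak g)$: $dF(X_1,\dots,X_{k+1})=\sum_{i<j}(-1)^{i+j}(-1)^{x_i(x_1+\dots+x_{i-1})}(-1)^{x_j(x_1+\dots+\widehat{x_i}+\dots+x_{j-1})}F([X_i,X_j],X_1,\dots,\widehat{X_i},\dots,\widehat{X_j},\dots,X_{k+1})$, so $d\phi(X_1,X_2)=-\phi([X_1,X_2])$ for $\phi\in\mathfrak g^*$. $s:\mathcal P(\mathfrak g)\to\mathcal A(\mathfrak g)$ is the algebra homomorphism (for $\cdot$ and $\wedge$) with $s(\phi)=d\phi$ for all $\phi\in\mathfrak g^*$. *)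

theory Defs
  imports Complex_Main "HOL-Combinatorics.Permutations"
begin

text \<open>Parities are booleans (True = odd).  The Lie superalgebra is a complex vector space
  (scalar multiplication scale) with a Z/2-grading g = G0 + G1 and a bracket br.\<close>

definition psgn :: "bool \<Rightarrow> complex" where
  "psgn b = (if b then -1 else 1)"

definition psum :: "bool list \<Rightarrow> bool" where
  "psum bs = foldr (\<lambda>a b. a \<noteq> b) bs False"

definition hcomp :: "'g set \<Rightarrow> 'g set \<Rightarrow> bool \<Rightarrow> 'g set" where
  "hcomp G0 G1 b = (if b then G1 else G0)"

definition homlist :: "'g set \<Rightarrow> 'g set \<Rightarrow> bool list \<Rightarrow> 'g list \<Rightarrow> bool" where
  "homlist G0 G1 bs xs \<longleftrightarrow> length bs = length xs \<and>
     (\<forall>i<length xs. xs ! i \<in> hcomp G0 G1 (bs ! i))"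

definition lie_superalgebra ::
  "(complex \<Rightarrow> 'g::ab_group_add \<Rightarrow> 'g) \<Rightarrow> 'g set \<Rightarrow> 'g set \<Rightarrow> ('g \<Rightarrow> 'g \<Rightarrow> 'g) \<Rightarrow> bool" where
  "lie_superalgebra scale G0 G1 br \<longleftrightarrow>
     vector_space scale \<and>
     (\<exists>B. finite B \<and> module.span scale B = UNIV) \<and>
     module.subspace scale G0 \<and> module.subspace scale G1 \<and>
     G0 \<inter> G1 = {0} \<and> (\<forall>x. \<exists>a\<in>G0. \<exists>b\<in>G1. x = a + b) \<and>
     (\<forall>c x y z. br (scale c x + y) z = scale c (br x z) + br y z) \<and>
     (\<forall>c x y z. br z (scale c x + y) = scale c (br z x) + br z y) \<and>
     (\<forall>p q x y. x \<in> hcomp G0 G1 p \<longrightarrow> y \<in> hcomp G0 G1 q \<longrightarrow>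
        br x y \<in> hcomp G0 G1 (p \<noteq> q)) \<and>
     (\<forall>p q x y. x \<in> hcomp G0 G1 p \<longrightarrow> y \<in> hcomp G0 G1 q \<longrightarrow>
        br x y = - scale (psgn (p \<and> q)) (br y x)) \<and>
     (\<forall>p q x y z. x \<in> hcomp G0 G1 p \<longrightarrow> y \<in> hcomp G0 G1 q \<longrightarrow>
        br x (br y z) = br (br x y) z + scale (psgn (p \<and> q)) (br y (br x z)))"

definition proj :: "'g::ab_group_add set \<Rightarrow> 'g set \<Rightarrow> bool \<Rightarrow> 'g \<Rightarrow> 'g" where
  "proj G0 G1 b x = (THE y. y \<in> hcomp G0 G1 b \<and> (\<exists>z \<in> hcomp G0 G1 (\<not> b). x = y + z))"

text \<open>Multilinear extension of a formula given on homogeneous arguments (with their parities).\<close>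
definition hext :: "'g::ab_group_add set \<Rightarrow> 'g set \<Rightarrow> (bool list \<Rightarrow> 'g list \<Rightarrow> complex)
    \<Rightarrow> 'g list \<Rightarrow> complex" where
  "hext G0 G1 \<Phi> xs = (\<Sum>bs \<in> {bs. length bs = length xs}. \<Phi> bs (map2 (proj G0 G1) bs xs))"

definition eps :: "(nat \<Rightarrow> nat) \<Rightarrow> bool list \<Rightarrow> complex" where
  "eps \<sigma> bs = (-1) ^ card {(i, j). i < j \<and> j < length bs \<and> \<sigma> j < \<sigma> i \<and> bs ! (\<sigma> i) \<and> bs ! (\<sigma> j)}"

text \<open>A form of all orders is a function on lists; its k-th component is its restriction
  to lists of length k (the empty list gives the constant term).\<close>
definition multilin :: "(complex \<Rightarrow> 'g \<Rightarrow> 'g) \<Rightarrow> ('g::ab_group_add list \<Rightarrow> complex) \<Rightarrow> bool" where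
  "multilin scale F \<longleftrightarrow> (\<forall>xs ys c x y.
     F (xs @ (scale c x + y) # ys) = c * F (xs @ x # ys) + F (xs @ y # ys))"

definition fin_order :: "('g list \<Rightarrow> complex) \<Rightarrow> bool" where
  "fin_order F \<longleftrightarrow> (\<exists>N. \<forall>xs. N < length xs \<longrightarrow> F xs = 0)"

definition supersym :: "'g set \<Rightarrow> 'g set \<Rightarrow> ('g list \<Rightarrow> complex) \<Rightarrow> bool" where
  "supersym G0 G1 F \<longleftrightarrow> (\<forall>bs xs \<sigma>. homlist G0 G1 bs xs \<longrightarrow> \<sigma> permutes {..<length xs} \<longrightarrow>
     eps \<sigma> bs * F (permute_list \<sigma> xs) = F xs)"

definition superalt :: "'g set \<Rightarrow> 'g set \<Rightarrow> ('g list \<Rightarrow> complex) \<Rightarrow> bool" where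
  "superalt G0 G1 F \<longleftrightarrow> (\<forall>bs xs \<sigma>. homlist G0 G1 bs xs \<longrightarrow> \<sigma> permutes {..<length xs} \<longrightarrow>
     of_int (sign \<sigma>) * eps \<sigma> bs * F (permute_list \<sigma> xs) = F xs)"

definition Pforms :: "(complex \<Rightarrow> 'g \<Rightarrow> 'g) \<Rightarrow> 'g::ab_group_add set \<Rightarrow> 'g set \<Rightarrow> ('g list \<Rightarrow> complex) set" where
  "Pforms scale G0 G1 = {F. multilin scale F \<and> fin_order F \<and> supersym G0 G1 F}"

definition Aforms :: "(complex \<Rightarrow> 'g \<Rightarrow> 'g) \<Rightarrow> 'g::ab_group_add set \<Rightarrow> 'g set \<Rightarrow> ('g list \<Rightarrow> complex) set" where
  "Aforms scale G0 G1 = {F. multilin scale F \<and> fin_order F \<and> superalt G0 G1 F}"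

text \<open>(F boxtimes G) on homogeneous arguments, with F contributing its a-form component;
  the degree of the relevant (homogeneous) part of G equals the parity sum of its arguments.\<close>
definition boxh :: "nat \<Rightarrow> ('g list \<Rightarrow> complex) \<Rightarrow> ('g list \<Rightarrow> complex) \<Rightarrow> bool list \<Rightarrow> 'g list \<Rightarrow> complex" where
  "boxh a F G bs xs = psgn (psum (drop a bs) \<and> psum (take a bs)) * F (take a xs) * G (drop a xs)"

definition sprod :: "'g::ab_group_add set \<Rightarrow> 'g set \<Rightarrow> ('g list \<Rightarrow> complex) \<Rightarrow> ('g list \<Rightarrow> complex) \<Rightarrow> 'g list \<Rightarrow> complex" where
  "sprod G0 G1 F G = hext G0 G1 (\<lambda>bs xs. \<Sum>a\<le>length xs.
      (1 / of_nat (fact a * fact (length xs - a))) *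
      (\<Sum>\<sigma> \<in> {\<sigma>. \<sigma> permutes {..<length xs}}.
         eps \<sigma> bs * boxh a F G (permute_list \<sigma> bs) (permute_list \<sigma> xs)))"

definition wprod :: "'g::ab_group_add set \<Rightarrow> 'g set \<Rightarrow> ('g list \<Rightarrow> complex) \<Rightarrow> ('g list \<Rightarrow> complex) \<Rightarrow> 'g list \<Rightarrow> complex" where
  "wprod G0 G1 F G = hext G0 G1 (\<lambda>bs xs. \<Sum>a\<le>length xs.
      (1 / of_nat (fact a * fact (length xs - a))) *
      (\<Sum>\<sigma> \<in> {\<sigma>. \<sigma> permutes {..<length xs}}.
         of_int (sign \<sigma>) * eps \<sigma> bs * boxh a F G (permute_list \<sigma> bs) (permute_list \<sigma> xs)))"

text \<open>Lie derivative L_X F for X homogeneous of parity p: on homogeneous arguments with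
  parities bs, only the degree-f part of F with f = p + sum bs contributes.\<close>
definition lieD :: "'g::ab_group_add set \<Rightarrow> 'g set \<Rightarrow> ('g \<Rightarrow> 'g \<Rightarrow> 'g) \<Rightarrow> bool \<Rightarrow> 'g
    \<Rightarrow> ('g list \<Rightarrow> complex) \<Rightarrow> 'g list \<Rightarrow> complex" where
  "lieD G0 G1 br p X F = hext G0 G1 (\<lambda>bs xs.
      - psgn (p \<and> (p \<noteq> psum bs)) *
      (\<Sum>j<length xs. psgn (p \<and> psum (take j bs)) * F (xs[j := br X (xs ! j)])))"

definition Is :: "(complex \<Rightarrow> 'g \<Rightarrow> 'g) \<Rightarrow> 'g::ab_group_add set \<Rightarrow> 'g set \<Rightarrow> ('g \<Rightarrow> 'g \<Rightarrow> 'g)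
    \<Rightarrow> ('g list \<Rightarrow> complex) set" where
  "Is scale G0 G1 br = {P \<in> Pforms scale G0 G1.
      \<forall>p X. X \<in> hcomp G0 G1 p \<longrightarrow> lieD G0 G1 br p X P = (\<lambda>_. 0)}"

definition Isplus :: "(complex \<Rightarrow> 'g \<Rightarrow> 'g) \<Rightarrow> 'g::ab_group_add set \<Rightarrow> 'g set \<Rightarrow> ('g \<Rightarrow> 'g \<Rightarrow> 'g)
    \<Rightarrow> ('g list \<Rightarrow> complex) set" where
  "Isplus scale G0 G1 br = {P \<in> Is scale G0 G1 br. P [] = 0}"

text \<open>Differential d (0-based indices; (-1)^(i+j) has the same parity as in 1-based form).\<close>
definition dform :: "'g::ab_group_add set \<Rightarrow> 'g set \<Rightarrow> ('g \<Rightarrow> 'g \<Rightarrow> 'g)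
    \<Rightarrow> ('g list \<Rightarrow> complex) \<Rightarrow> 'g list \<Rightarrow> complex" where
  "dform G0 G1 br F = hext G0 G1 (\<lambda>bs xs.
      \<Sum>(i, j) \<in> {(i, j). i < j \<and> j < length xs}.
        (-1) ^ (i + j) * psgn (bs ! i \<and> psum (take i bs)) *
        psgn (bs ! j \<and> (psum (take j bs) \<noteq> bs ! i)) *
        F (br (xs ! i) (xs ! j) # [xs ! l. l \<leftarrow> [0..<length xs], l \<noteq> i, l \<noteq> j]))"

definition gdual :: "(complex \<Rightarrow> 'g \<Rightarrow> 'g) \<Rightarrow> ('g::ab_group_add list \<Rightarrow> complex) set" where
  "gdual scale = {\<phi>. multilin scale \<phi> \<and> (\<forall>xs. length xs \<noteq> 1 \<longrightarrow> \<phi> xs = 0)}"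

definition constf :: "complex \<Rightarrow> 'g list \<Rightarrow> complex" where
  "constf c = (\<lambda>xs. if xs = [] then c else 0)"

definition is_s_map :: "(complex \<Rightarrow> 'g \<Rightarrow> 'g) \<Rightarrow> 'g::ab_group_add set \<Rightarrow> 'g set \<Rightarrow> ('g \<Rightarrow> 'g \<Rightarrow> 'g)
    \<Rightarrow> (('g list \<Rightarrow> complex) \<Rightarrow> ('g list \<Rightarrow> complex)) \<Rightarrow> bool" where
  "is_s_map scale G0 G1 br s \<longleftrightarrow>
     (\<forall>F \<in> Pforms scale G0 G1. s F \<in> Aforms scale G0 G1) \<and>
     (\<forall>F \<in> Pforms scale G0 G1. \<forall>G \<in> Pforms scale G0 G1. \<forall>c.
        s (\<lambda>xs. c * F xs + G xs) = (\<lambda>xs. c * s F xs + s G xs)) \<and>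
     (\<forall>F \<in> Pforms scale G0 G1. \<forall>G \<in> Pforms scale G0 G1.
        s (sprod G0 G1 F G) = wprod G0 G1 (s F) (s G)) \<and>
     (\<forall>c. s (constf c) = constf c) \<and>
     (\<forall>\<phi> \<in> gdual scale. s \<phi> = dform G0 G1 br \<phi>)"

end

theory Submission
  imports Defs
begin

text \<open>
  Let \<open>(e\<^sub>i)\<close> be a homogeneous basis of \<open>g\<close> with dual forms \<open>\<phi>\<^sub>i\<close>. A form \<open>P\<close> of order \<open>k\<close>
  satisfies Euler's identity \<open>k P = \<Sum>\<^sub>i \<phi>\<^sub>i \<cdot> \<iota>\<^bsub>e\<^sub>i\<^esub> P\<close>, where \<open>\<iota>\<close> is the contraction. Since
  \<open>s\<close> is multiplicative and \<open>s(\<phi>\<^sub>i) = d\<phi>\<^sub>i\<close>, induction on \<open>k\<close> gives the explicit formula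
  \<open>s(P)(X\<^sub>1, \<dots>, X\<^sub>2\<^sub>k) = c\<^sub>k \<cdot> Alt P([X\<^sub>1,X\<^sub>2], \<dots>, [X\<^sub>2\<^sub>k\<^sub>-\<^sub>1,X\<^sub>2\<^sub>k])\<close> with
  \<open>c\<^sub>k = (-1)\<^sup>k / (2\<^sup>k k!)\<close>, \<open>Alt\<close> being the super-alternation, and \<open>s(P)\<close> vanishes in all other orders.

  If \<open>P\<close> is invariant, \<open>L\<^bsub>X\<^sub>1\<^esub> P\<close> vanishes at \<open>(X\<^sub>2, [X\<^sub>3,X\<^sub>4], \<dots>)\<close>. This expresses
  \<open>P([X\<^sub>1,X\<^sub>2], [X\<^sub>3,X\<^sub>4], \<dots>)\<close> through the terms \<open>P(X\<^sub>2, \<dots>, [X\<^sub>1,[X\<^sub>2\<^sub>j\<^sub>+\<^sub>1,X\<^sub>2\<^sub>j\<^sub>+\<^sub>2]], \<dots>)\<close>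
  with \<open>j \<ge> 1\<close>, each of which becomes, after permuting the arguments, a term of the form
  \<open>P([Y\<^sub>3,[Y\<^sub>1,Y\<^sub>2]], Y\<^sub>4, [Y\<^sub>5,Y\<^sub>6], \<dots>)\<close>. The alternation of such a term is a third of the
  alternation of its cyclic sum over \<open>Y\<^sub>1, Y\<^sub>2, Y\<^sub>3\<close>, which is zero by the Jacobi identity.
  So \<open>s(P)\<close> vanishes in every order \<open>k \<ge> 1\<close>, and in order \<open>0\<close> it is the constant term.
\<close>

section \<open>Parities and homogeneous components\<close>

lemma sum_single_nat:
  fixes n :: nat
  assumes "m \<le> n" "\<And>a. a \<le> n \<Longrightarrow> a \<noteq> m \<Longrightarrow> f a = 0"
  shows "(\<Sum>a\<le>n. f a) = f m"
proof -
  have "(\<Sum>a\<le>n. f a) = (\<Sum>a\<in>{m}. f a)"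
    using assms by (intro sum.mono_neutral_right) auto
  then show ?thesis by simp
qed

lemma psgn_simps [simp]: "psgn True = -1" "psgn False = 1"
  by (simp_all add: psgn_def)

lemma psgn_sq [simp]: "psgn a * psgn a = 1"
  by (simp add: psgn_def)

lemma psum_Nil [simp]: "psum [] = False"
  by (simp add: psum_def)

lemma psum_Cons [simp]: "psum (b # bs) = (b \<noteq> psum bs)"
  by (simp add: psum_def)

lemma psum_append [simp]: "psum (xs @ ys) = (psum xs \<noteq> psum ys)"
  by (induction xs) auto

lemma psum_count: "psum bs = odd (count (mset bs) True)"
  by (induction bs) auto

lemma psum_permute [simp]:
  assumes "\<sigma> permutes {..<length bs}"
  shows "psum (permute_list \<sigma> bs) = psum bs"
  using assms by (simp add: psum_count mset_permute_list)

locale lie_superalg =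
  fixes scale :: "complex \<Rightarrow> 'g::ab_group_add \<Rightarrow> 'g"
    and G0 G1 :: "'g set"
    and br :: "'g \<Rightarrow> 'g \<Rightarrow> 'g"
  assumes lsa: "lie_superalgebra scale G0 G1 br"
begin

abbreviation gpart where "gpart \<equiv> hcomp G0 G1"
abbreviation gproj where "gproj \<equiv> proj G0 G1"

sublocale vector_space scale
  using lsa by (simp add: lie_superalgebra_def)

lemma finite_spanning_set: "\<exists>B. finite B \<and> span B = UNIV"
  using lsa by (simp add: lie_superalgebra_def)

lemma bracket_linear_left: "br (scale c x + y) z = scale c (br x z) + br y z"
  using lsa by (simp add: lie_superalgebra_def)

lemma bracket_linear_right: "br z (scale c x + y) = scale c (br z x) + br z y"
  using lsa by (simp add: lie_superalgebra_def)

lemma bracket_gpart: "x \<in> gpart p \<Longrightarrow> y \<in> gpart q \<Longrightarrow> br x y \<in> gpart (p \<noteq> q)"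
  using lsa unfolding lie_superalgebra_def by blast

lemma bracket_antisym: "x \<in> gpart p \<Longrightarrow> y \<in> gpart q \<Longrightarrow> br x y = - scale (psgn (p \<and> q)) (br y x)"
  using lsa unfolding lie_superalgebra_def by blast

lemma bracket_jacobi: "x \<in> gpart p \<Longrightarrow> y \<in> gpart q \<Longrightarrow>
    br x (br y z) = br (br x y) z + scale (psgn (p \<and> q)) (br y (br x z))"
  using lsa unfolding lie_superalgebra_def by blast

lemma subspace_gpart: "subspace (gpart b)"
  using lsa by (simp add: lie_superalgebra_def hcomp_def)

lemma gpart_zero [simp]: "0 \<in> gpart b"
  using subspace_gpart subspace_0 by blast

lemma gpart_add: "x \<in> gpart b \<Longrightarrow> y \<in> gpart b \<Longrightarrow> x + y \<in> gpart b"
  using subspace_gpart subspace_add by blast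

lemma gpart_scale: "x \<in> gpart b \<Longrightarrow> scale c x \<in> gpart b"
  using subspace_gpart subspace_scale by blast

lemma gpart_both_eq_0: "x \<in> gpart b \<Longrightarrow> x \<in> gpart (\<not> b) \<Longrightarrow> x = 0"
  using lsa by (cases b) (auto simp: lie_superalgebra_def hcomp_def)

lemma gpart_decomp: "\<exists>y\<in>gpart b. \<exists>z\<in>gpart (\<not> b). x = y + z"
proof -
  have "\<exists>a\<in>G0. \<exists>c\<in>G1. x = a + c"
    using lsa by (simp add: lie_superalgebra_def)
  then obtain a c where ac: "a \<in> G0" "c \<in> G1" "x = a + c" by blast
  show ?thesis
  proof (cases b)
    case True
    have "c \<in> gpart b" "a \<in> gpart (\<not> b)" using True ac by (auto simp: hcomp_def)
    then show ?thesis using ac(3) by (metis add.commute)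
  next
    case False
    then show ?thesis using ac by (auto simp: hcomp_def)
  qed
qed

lemma gpart_decomp_unique:
  assumes "y \<in> gpart b" "z \<in> gpart (\<not> b)" "y' \<in> gpart b" "z' \<in> gpart (\<not> b)" "y + z = y' + z'"
  shows "y = y'"
proof -
  have "y - y' = z' - z" using assms(5) by (simp add: algebra_simps)
  moreover have "y - y' \<in> gpart b" using assms subspace_gpart subspace_diff by blast
  moreover have "z' - z \<in> gpart (\<not> b)" using assms subspace_gpart subspace_diff by blast
  ultimately show ?thesis using gpart_both_eq_0 by fastforce
qed

lemma gproj_eqI:
  assumes "y \<in> gpart b" "z \<in> gpart (\<not> b)" "x = y + z"
  shows "gproj b x = y"
  unfolding proj_def
proof (rule the_equality)
  show "y \<in> gpart b \<and> (\<exists>z\<in>gpart (\<not> b). x = y + z)" using assms by blast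
  fix y' assume "y' \<in> gpart b \<and> (\<exists>z\<in>gpart (\<not> b). x = y' + z)"
  then show "y' = y" using assms gpart_decomp_unique by metis
qed

lemma gproj_in [simp]: "gproj b x \<in> gpart b"
proof -
  obtain y z where "y \<in> gpart b" "z \<in> gpart (\<not> b)" "x = y + z" using gpart_decomp by blast
  then show ?thesis using gproj_eqI by simp
qed

lemma gproj_add_gproj_Not: "gproj b x + gproj (\<not> b) x = x"
proof -
  obtain y z where yz: "y \<in> gpart b" "z \<in> gpart (\<not> b)" "x = y + z" using gpart_decomp by blast
  have "gproj b x = y" using gproj_eqI yz by simp
  moreover have "gproj (\<not> b) x = z" using yz by (intro gproj_eqI) (auto simp: add.commute)
  ultimately show ?thesis using yz by simp
qed

lemma gproj_False_add_True: "gproj False x + gproj True x = x"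
  using gproj_add_gproj_Not[of False x] by simp

lemma gproj_gpart: "x \<in> gpart b \<Longrightarrow> gproj b x = x"
  by (rule gproj_eqI[of x b 0]) auto

lemma gproj_Not_gpart: "x \<in> gpart b \<Longrightarrow> gproj (\<not> b) x = 0"
  by (rule gproj_eqI[of 0 "\<not> b" x]) auto

lemma gproj_other_gpart: "x \<in> gpart b \<Longrightarrow> c \<noteq> b \<Longrightarrow> gproj c x = 0"
  using gproj_Not_gpart[of x b] by (cases c; cases b) auto

lemma gproj_linear: "gproj b (scale c x + y) = scale c (gproj b x) + gproj b y"
proof (rule gproj_eqI)
  show "scale c (gproj b x) + gproj b y \<in> gpart b" by (simp add: gpart_add gpart_scale)
  show "scale c (gproj (\<not> b) x) + gproj (\<not> b) y \<in> gpart (\<not> b)" by (simp add: gpart_add gpart_scale)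
  have "scale c x + y = scale c (gproj b x + gproj (\<not> b) x) + (gproj b y + gproj (\<not> b) y)"
    by (simp add: gproj_add_gproj_Not)
  then show "scale c x + y = scale c (gproj b x) + gproj b y + (scale c (gproj (\<not> b) x) + gproj (\<not> b) y)"
    by (simp add: algebra_simps)
qed

lemma bracket_add_left: "br (x + y) z = br x z + br y z"
  using bracket_linear_left[of 1 x y z] by simp

lemma bracket_add_right: "br z (x + y) = br z x + br z y"
  using bracket_linear_right[of z 1 x y] by simp

lemma bracket_zero [simp]: "br 0 z = 0" "br z 0 = 0"
  using bracket_add_left[of 0 0 z] bracket_add_right[of z 0 0] by simp_all

lemma bracket_scale_right: "br z (scale c x) = scale c (br z x)"
  using bracket_linear_right[of z c x 0] by simp

lemma bracket_minus_right: "br y (- v) = - br y v"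
  using bracket_add_right[of y v "- v"] by (simp add: eq_neg_iff_add_eq_0 add.commute)

section \<open>Multilinear forms\<close>

lemma multilin_update:
  assumes "multilin scale F" "j < length zs"
  shows "F (zs[j := scale c x + y]) = c * F (zs[j := x]) + F (zs[j := y])"
proof -
  have e: "zs[j := v] = take j zs @ v # drop (Suc j) zs" for v
    using assms(2) by (simp add: upd_conv_take_nth_drop)
  show ?thesis unfolding e using assms(1) by (simp add: multilin_def)
qed

lemma multilin_zero_entry:
  assumes "multilin scale F" "j < length zs" "zs ! j = 0"
  shows "F zs = 0"
proof -
  have "F (zs[j := scale 1 0 + 0]) = 1 * F (zs[j := 0]) + F (zs[j := 0])"
    by (rule multilin_update[OF assms(1,2)])
  moreover have "zs[j := 0] = zs" using assms(3) by (metis list_update_id)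
  ultimately show ?thesis by simp
qed

lemma multilin_update_add:
  assumes "multilin scale F" "j < length zs"
  shows "F (zs[j := x + y]) = F (zs[j := x]) + F (zs[j := y])"
  using multilin_update[OF assms, of 1 x y] by simp

lemma multilin_update_scale:
  assumes "multilin scale F" "j < length zs"
  shows "F (zs[j := scale c x]) = c * F (zs[j := x])"
  using multilin_update[OF assms, of c x 0] multilin_zero_entry[OF assms(1), of j "zs[j:=0]"] assms(2) by simp

lemma multilin_update_sum:
  assumes "multilin scale F" "j < length zs"
  shows "F (zs[j := (\<Sum>i\<in>I. scale (c i) (v i))]) = (\<Sum>i\<in>I. c i * F (zs[j := v i]))"
proof (induction I rule: infinite_finite_induct)
  case (infinite A) then show ?case using multilin_zero_entry[OF assms(1), of j "zs[j := 0]"] assms(2) by simp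
next
  case empty then show ?case using multilin_zero_entry[OF assms(1), of j "zs[j := 0]"] assms(2) by simp
next
  case (insert a A)
  then show ?case using multilin_update[OF assms] by simp
qed

lemma finite_bool_lists [simp]: "finite {bs :: bool list. length bs = n}"
proof -
  have "{bs :: bool list. length bs = n} \<subseteq> {bs. set bs \<subseteq> UNIV \<and> length bs = n}" by auto
  then show ?thesis using finite_lists_length_eq[of "UNIV :: bool set" n] by simp
qed

lemma sum_bool_lists_Suc:
  "(\<Sum>bs\<in>{bs :: bool list. length bs = Suc n}. f bs)
     = (\<Sum>bs\<in>{bs. length bs = n}. f (False # bs) + f (True # bs))"
proof -
  let ?A = "{bs :: bool list. length bs = n}"
  have eq: "{bs :: bool list. length bs = Suc n} = (Cons False) ` ?A \<union> (Cons True) ` ?A"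
  proof
    show "{bs :: bool list. length bs = Suc n} \<subseteq> (Cons False) ` ?A \<union> (Cons True) ` ?A"
    proof
      fix bs :: "bool list" assume "bs \<in> {bs. length bs = Suc n}"
      then obtain b cs where "bs = b # cs" "length cs = n" by (auto simp: length_Suc_conv)
      then show "bs \<in> (Cons False) ` ?A \<union> (Cons True) ` ?A" by (cases b) auto
    qed
  qed auto
  have "(\<Sum>bs\<in>{bs :: bool list. length bs = Suc n}. f bs)
      = (\<Sum>bs\<in>(Cons False) ` ?A. f bs) + (\<Sum>bs\<in>(Cons True) ` ?A. f bs)"
    unfolding eq by (rule sum.union_disjoint) auto
  also have "\<dots> = (\<Sum>bs\<in>?A. f (False # bs)) + (\<Sum>bs\<in>?A. f (True # bs))"
    by (simp add: sum.reindex)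
  finally show ?thesis by (simp add: sum.distrib)
qed

lemma homlist_map2_gproj:
  assumes "length cs = length xs"
  shows "homlist G0 G1 cs (map2 gproj cs xs)"
  using assms by (auto simp: homlist_def)

lemma multilin_expand_append:
  assumes "multilin scale F"
  shows "F (pre @ xs) = (\<Sum>bs\<in>{bs. length bs = length xs}. F (pre @ map2 gproj bs xs))"
proof (induction xs arbitrary: pre)
  case Nil
  have "{bs :: bool list. length bs = 0} = {[]}" by auto
  then show ?case by simp
next
  case (Cons x xs)
  have "F (pre @ x # xs) = F (pre @ (scale 1 (gproj False x) + gproj True x) # xs)"
    by (simp add: gproj_False_add_True)
  also have "\<dots> = F (pre @ gproj False x # xs) + F (pre @ gproj True x # xs)"
    using assms[unfolded multilin_def, rule_format, where xs=pre and ys=xs and c=1 and x="gproj False x" and y="gproj True x"] by simp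
  also have "\<dots> = (\<Sum>bs\<in>{bs. length bs = length xs}. F ((pre @ [gproj False x]) @ map2 gproj bs xs))
      + (\<Sum>bs\<in>{bs. length bs = length xs}. F ((pre @ [gproj True x]) @ map2 gproj bs xs))"
    using Cons.IH[of "pre @ [gproj False x]"] Cons.IH[of "pre @ [gproj True x]"] by simp
  also have "\<dots> = (\<Sum>bs\<in>{bs. length bs = length (x # xs)}. F (pre @ map2 gproj bs (x # xs)))"
    by (simp add: sum_bool_lists_Suc sum.distrib)
  finally show ?case .
qed

lemma multilin_eq_hext:
  assumes "multilin scale F"
  shows "F xs = hext G0 G1 (\<lambda>_ ys. F ys) xs"
  using multilin_expand_append[OF assms, of "[]" xs] by (simp add: hext_def)

lemma hext_cong:
  assumes "\<And>cs ys. length cs = length ys \<Longrightarrow> homlist G0 G1 cs ys \<Longrightarrow> \<Phi> cs ys = \<Psi> cs ys"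
  shows "hext G0 G1 \<Phi> xs = hext G0 G1 \<Psi> xs"
  unfolding hext_def using assms homlist_map2_gproj by (intro sum.cong) auto

lemma map2_gproj_homlist:
  assumes "homlist G0 G1 bs xs"
  shows "map2 gproj bs xs = xs"
  using assms by (auto simp: homlist_def gproj_gpart intro!: nth_equalityI)

lemma hext_homlist:
  assumes "homlist G0 G1 bs xs"
    and "\<And>cs ys i. length cs = length ys \<Longrightarrow> length ys = length xs \<Longrightarrow> i < length ys \<Longrightarrow> ys ! i = 0 \<Longrightarrow> \<Phi> cs ys = 0"
  shows "hext G0 G1 \<Phi> xs = \<Phi> bs xs"
proof -
  have lb: "length bs = length xs" using assms(1) by (simp add: homlist_def)
  have "hext G0 G1 \<Phi> xs = (\<Sum>cs\<in>{bs}. \<Phi> cs (map2 gproj cs xs))"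
    unfolding hext_def
  proof (rule sum.mono_neutral_right)
    show "{bs} \<subseteq> {bs. length bs = length xs}" using lb by simp
    show "\<forall>cs\<in>{bs. length bs = length xs} - {bs}. \<Phi> cs (map2 gproj cs xs) = 0"
    proof
      fix cs assume cs: "cs \<in> {bs. length bs = length xs} - {bs}"
      then have lc: "length cs = length xs" and ne: "cs \<noteq> bs" by auto
      have "\<exists>i < length xs. cs ! i \<noteq> bs ! i"
      proof (rule ccontr)
        assume "\<not> (\<exists>i < length xs. cs ! i \<noteq> bs ! i)"
        then have "cs = bs" using lc lb by (auto intro: nth_equalityI)
        then show False using ne by simp
      qed
      then obtain i where i: "i < length xs" "cs ! i \<noteq> bs ! i" by blast
      have "xs ! i \<in> gpart (bs ! i)" using assms(1) i by (simp add: homlist_def)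
      then have "map2 gproj cs xs ! i = 0" using i lc gproj_other_gpart by simp
      then show "\<Phi> cs (map2 gproj cs xs) = 0" using assms(2)[of cs "map2 gproj cs xs" i] lc i by simp
    qed
  qed simp
  also have "\<dots> = \<Phi> bs xs" using map2_gproj_homlist[OF assms(1)] by simp
  finally show ?thesis .
qed

lemma map2_gproj_append_Cons:
  assumes "length cs = length xs + Suc (length ys)"
  shows "map2 gproj cs (xs @ u # ys) = (map2 gproj cs (xs @ 0 # ys))[length xs := gproj (cs ! length xs) u]"
  using assms by (auto intro!: nth_equalityI simp: nth_append nth_list_update)

lemma hext_multilin:
  assumes "\<And>cs ys j c x y. length cs = length ys \<Longrightarrow> j < length ys \<Longrightarrow>
     \<Phi> cs (ys[j := scale c x + y]) = c * \<Phi> cs (ys[j := x]) + \<Phi> cs (ys[j := y])"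
  shows "multilin scale (hext G0 G1 \<Phi>)"
  unfolding multilin_def
proof (intro allI)
  fix xs ys :: "'g list" and c :: complex and x y :: 'g
  let ?n = "length (xs @ x # ys)"
  let ?j = "length xs"
  have "hext G0 G1 \<Phi> (xs @ (scale c x + y) # ys) =
     (\<Sum>cs\<in>{cs. length cs = ?n}. c * \<Phi> cs (map2 gproj cs (xs @ x # ys)) + \<Phi> cs (map2 gproj cs (xs @ y # ys)))"
    unfolding hext_def
  proof (rule sum.cong)
    fix cs :: "bool list" assume "cs \<in> {cs. length cs = ?n}"
    then have lc: "length cs = ?j + Suc (length ys)" by simp
    let ?w = "map2 gproj cs (xs @ 0 # ys)"
    have lw: "length ?w = length cs" using lc by simp
    have "\<Phi> cs (map2 gproj cs (xs @ (scale c x + y) # ys)) = \<Phi> cs (?w[?j := scale c (gproj (cs ! ?j) x) + gproj (cs ! ?j) y])"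
      by (subst map2_gproj_append_Cons[OF lc]) (simp add: gproj_linear)
    also have "\<dots> = c * \<Phi> cs (?w[?j := gproj (cs ! ?j) x]) + \<Phi> cs (?w[?j := gproj (cs ! ?j) y])"
      using assms[of cs ?w ?j] lw lc by simp
    finally show "\<Phi> cs (map2 gproj cs (xs @ (scale c x + y) # ys)) =
      c * \<Phi> cs (map2 gproj cs (xs @ x # ys)) + \<Phi> cs (map2 gproj cs (xs @ y # ys))"
      by (simp only: map2_gproj_append_Cons[OF lc, of x] map2_gproj_append_Cons[OF lc, of y])
  qed simp
  also have "\<dots> = c * hext G0 G1 \<Phi> (xs @ x # ys) + hext G0 G1 \<Phi> (xs @ y # ys)"
    by (simp add: hext_def sum.distrib sum_distrib_left)
  finally show "hext G0 G1 \<Phi> (xs @ (scale c x + y) # ys) = c * hext G0 G1 \<Phi> (xs @ x # ys) + hext G0 G1 \<Phi> (xs @ y # ys)" .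
qed

lemma homlist_length: "homlist G0 G1 bs xs \<Longrightarrow> length bs = length xs"
  by (simp add: homlist_def)

lemma multilin_eqI_homlist:
  assumes "multilin scale F" "multilin scale G"
    and "\<And>bs xs. homlist G0 G1 bs xs \<Longrightarrow> F xs = G xs"
  shows "F = G"
proof
  fix xs
  show "F xs = G xs"
    using multilin_eq_hext[OF assms(1), of xs] multilin_eq_hext[OF assms(2), of xs]
      hext_cong[of "\<lambda>_ ys. F ys" "\<lambda>_ ys. G ys" xs] assms(3) by metis
qed

end

section \<open>Signs of permutations\<close>

lemma prod_psgn_eq_power_card:
  assumes "finite D"
  shows "(\<Prod>x\<in>D. psgn (P x)) = (-1) ^ card {x\<in>D. P x}"
proof -
  have "(\<Prod>x\<in>D. psgn (P x)) = (\<Prod>x\<in>D. if P x then -1 else 1)"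
    by (simp add: psgn_def)
  also have "\<dots> = (\<Prod>x\<in>D \<inter> {x. P x}. -1) * (\<Prod>x\<in>D \<inter> - {x. P x}. 1)"
    using assms by (rule prod.If_cases)
  also have "\<dots> = (-1) ^ card (D \<inter> {x. P x})" by simp
  also have "D \<inter> {x. P x} = {x\<in>D. P x}" by auto
  finally show ?thesis .
qed

definition odd_pairs :: "bool list \<Rightarrow> (nat \<times> nat) set" where
  "odd_pairs bs = {(u, v). u < v \<and> v < length bs \<and> bs ! u \<and> bs ! v}"

lemma finite_odd_pairs [simp]: "finite (odd_pairs bs)"
  by (rule finite_subset[of _ "{..<length bs} \<times> {..<length bs}"]) (auto simp: odd_pairs_def)

definition inverted :: "(nat \<Rightarrow> nat) \<Rightarrow> nat \<times> nat \<Rightarrow> bool" where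
  "inverted \<pi> uv = (inv \<pi> (snd uv) < inv \<pi> (fst uv))"

lemma eps_eq_prod_odd_pairs:
  assumes p: "\<pi> permutes {..<length bs}"
  shows "eps \<pi> bs = (\<Prod>x\<in>odd_pairs bs. psgn (inverted \<pi> x))"
proof -
  let ?I = "{(i, j). i < j \<and> j < length bs \<and> \<pi> j < \<pi> i \<and> bs ! (\<pi> i) \<and> bs ! (\<pi> j)}"
  let ?R = "{x\<in>odd_pairs bs. inverted \<pi> x}"
  have lt: "\<And>i. i < length bs \<Longrightarrow> \<pi> i < length bs"
    using permutes_in_image[OF p] by simp
  have lti: "\<And>i. i < length bs \<Longrightarrow> inv \<pi> i < length bs"
    using permutes_in_image[OF permutes_inv[OF p]] by simp
  have "bij_betw (\<lambda>(i, j). (\<pi> j, \<pi> i)) ?I ?R"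
  proof (rule bij_betw_byWitness[where f' = "\<lambda>(u, v). (inv \<pi> v, inv \<pi> u)"])
    show "\<forall>a\<in>?I. (\<lambda>(u, v). (inv \<pi> v, inv \<pi> u)) ((\<lambda>(i, j). (\<pi> j, \<pi> i)) a) = a"
      by (auto simp: permutes_inverses[OF p])
    show "\<forall>a\<in>?R. (\<lambda>(i, j). (\<pi> j, \<pi> i)) ((\<lambda>(u, v). (inv \<pi> v, inv \<pi> u)) a) = a"
      by (auto simp: permutes_inverses[OF p])
    show "(\<lambda>(i, j). (\<pi> j, \<pi> i)) ` ?I \<subseteq> ?R"
      using lt by (auto simp: odd_pairs_def inverted_def permutes_inverses[OF p])
    show "(\<lambda>(u, v). (inv \<pi> v, inv \<pi> u)) ` ?R \<subseteq> ?I"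
    proof
      fix x assume "x \<in> (\<lambda>(u, v). (inv \<pi> v, inv \<pi> u)) ` ?R"
      then obtain u v where uv: "(u, v) \<in> odd_pairs bs" "inverted \<pi> (u, v)" "x = (inv \<pi> v, inv \<pi> u)" by auto
      then show "x \<in> ?I" using lti by (auto simp: odd_pairs_def inverted_def permutes_inverses[OF p])
    qed
  qed
  then have "card ?I = card ?R" by (rule bij_betw_same_card)
  then show ?thesis unfolding eps_def prod_psgn_eq_power_card[OF finite_odd_pairs] by simp
qed

definition sorted_pair :: "nat \<times> nat \<Rightarrow> nat \<times> nat" where
  "sorted_pair = (\<lambda>(u, v). (min u v, max u v))"

lemma bij_betw_odd_pairs_permute:
  assumes s: "\<sigma> permutes {..<length bs}"
  shows "bij_betw (\<lambda>(u, v). sorted_pair (inv \<sigma> u, inv \<sigma> v))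
           (odd_pairs bs) (odd_pairs (permute_list \<sigma> bs))"
proof (rule bij_betw_byWitness[where f' = "\<lambda>(p, q). sorted_pair (\<sigma> p, \<sigma> q)"])
  let ?n = "length bs" and ?cs = "permute_list \<sigma> bs"
  have lts: "\<And>i. i < ?n \<Longrightarrow> inv \<sigma> i < ?n"
    using permutes_in_image[OF permutes_inv[OF s]] by simp
  have ls: "\<And>i. i < ?n \<Longrightarrow> \<sigma> i < ?n"
    using permutes_in_image[OF s] by simp
  have csn: "\<And>p. p < ?n \<Longrightarrow> ?cs ! p = bs ! \<sigma> p"
    using permute_list_nth[OF s] by simp
  have injs: "\<And>a b. inv \<sigma> a = inv \<sigma> b \<Longrightarrow> a = b"
    by (metis permutes_inverses(1)[OF s])
  have injs': "\<And>a b. \<sigma> a = \<sigma> b \<Longrightarrow> a = b"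
    by (metis permutes_inverses(2)[OF s])
  show "\<forall>a\<in>odd_pairs bs. (\<lambda>(p, q). sorted_pair (\<sigma> p, \<sigma> q)) ((\<lambda>(u, v). sorted_pair (inv \<sigma> u, inv \<sigma> v)) a) = a"
    by (auto simp: odd_pairs_def sorted_pair_def min_def max_def permutes_inverses[OF s])
  show "\<forall>a\<in>odd_pairs ?cs. (\<lambda>(u, v). sorted_pair (inv \<sigma> u, inv \<sigma> v)) ((\<lambda>(p, q). sorted_pair (\<sigma> p, \<sigma> q)) a) = a"
    by (auto simp: odd_pairs_def sorted_pair_def min_def max_def permutes_inverses[OF s])
  show "(\<lambda>(u, v). sorted_pair (inv \<sigma> u, inv \<sigma> v)) ` odd_pairs bs \<subseteq> odd_pairs ?cs"
  proof
    fix x assume "x \<in> (\<lambda>(u, v). sorted_pair (inv \<sigma> u, inv \<sigma> v)) ` odd_pairs bs"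
    then obtain u v where uv: "u < v" "v < ?n" "bs ! u" "bs ! v" "x = sorted_pair (inv \<sigma> u, inv \<sigma> v)"
      by (auto simp: odd_pairs_def)
    then have "inv \<sigma> u \<noteq> inv \<sigma> v" using injs by fastforce
    then show "x \<in> odd_pairs ?cs"
      using uv lts[of u] lts[of v] csn[of "inv \<sigma> u"] csn[of "inv \<sigma> v"]
      by (auto simp: odd_pairs_def sorted_pair_def min_def max_def permutes_inverses[OF s])
  qed
  show "(\<lambda>(p, q). sorted_pair (\<sigma> p, \<sigma> q)) ` odd_pairs ?cs \<subseteq> odd_pairs bs"
  proof
    fix x assume "x \<in> (\<lambda>(p, q). sorted_pair (\<sigma> p, \<sigma> q)) ` odd_pairs ?cs"
    then obtain p q where pq: "p < q" "q < ?n" "?cs ! p" "?cs ! q" "x = sorted_pair (\<sigma> p, \<sigma> q)"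
      by (auto simp: odd_pairs_def)
    then have "\<sigma> p \<noteq> \<sigma> q" using injs' by fastforce
    then show "x \<in> odd_pairs bs"
      using pq ls[of p] ls[of q] csn[of p] csn[of q]
      by (auto simp: odd_pairs_def sorted_pair_def min_def max_def)
  qed
qed

lemma psgn_inverted_compose:
  assumes s: "\<sigma> permutes {..<length bs}" and t: "\<tau> permutes {..<length bs}"
    and uv: "(u, v) \<in> odd_pairs bs"
  shows "psgn (inverted (\<sigma> \<circ> \<tau>) (u, v))
    = psgn (inverted \<sigma> (u, v)) * psgn (inverted \<tau> (sorted_pair (inv \<sigma> u, inv \<sigma> v)))"
proof -
  have "u \<noteq> v" using uv by (simp add: odd_pairs_def)
  then have "inv \<sigma> u \<noteq> inv \<sigma> v" by (metis permutes_inverses(1)[OF s])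
  moreover from this have "inv \<tau> (inv \<sigma> u) \<noteq> inv \<tau> (inv \<sigma> v)"
    by (metis permutes_inverses(1)[OF t])
  moreover have "inv (\<sigma> \<circ> \<tau>) = inv \<tau> \<circ> inv \<sigma>"
    using permutes_bij[OF s] permutes_bij[OF t] by (simp add: o_inv_distrib)
  ultimately show ?thesis
    unfolding inverted_def sorted_pair_def
    by (cases "inv \<sigma> u < inv \<sigma> v") (auto simp: psgn_def min_def max_def)
qed

lemma eps_compose:
  assumes s: "\<sigma> permutes {..<length bs}" and t: "\<tau> permutes {..<length bs}"
  shows "eps (\<sigma> \<circ> \<tau>) bs = eps \<sigma> bs * eps \<tau> (permute_list \<sigma> bs)"
proof -
  let ?g = "\<lambda>(u, v). sorted_pair (inv \<sigma> u, inv \<sigma> v)"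
  have reindex: "(\<Prod>x\<in>odd_pairs bs. psgn (inverted \<tau> (?g x)))
      = (\<Prod>y\<in>odd_pairs (permute_list \<sigma> bs). psgn (inverted \<tau> y))"
    using bij_betw_odd_pairs_permute[OF s] by (rule prod.reindex_bij_betw)
  have "eps (\<sigma> \<circ> \<tau>) bs = (\<Prod>x\<in>odd_pairs bs. psgn (inverted (\<sigma> \<circ> \<tau>) x))"
    by (rule eps_eq_prod_odd_pairs[OF permutes_compose[OF t s]])
  also have "\<dots> = (\<Prod>x\<in>odd_pairs bs. psgn (inverted \<sigma> x) * psgn (inverted \<tau> (?g x)))"
    using psgn_inverted_compose[OF s t] by (intro prod.cong) auto
  also have "\<dots> = (\<Prod>x\<in>odd_pairs bs. psgn (inverted \<sigma> x))
      * (\<Prod>y\<in>odd_pairs (permute_list \<sigma> bs). psgn (inverted \<tau> y))"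
    unfolding prod.distrib reindex ..
  also have "\<dots> = eps \<sigma> bs * eps \<tau> (permute_list \<sigma> bs)"
    using eps_eq_prod_odd_pairs[OF s] eps_eq_prod_odd_pairs[of \<tau> "permute_list \<sigma> bs"] t
    by (simp only: length_permute_list)
  finally show ?thesis .
qed

lemma eps_id [simp]: "eps id bs = 1"
proof -
  have "{(i, j). i < j \<and> j < length bs \<and> id j < id i \<and> bs ! id i \<and> bs ! id j} = {}" by auto
  then show ?thesis unfolding eps_def by (simp only:) simp
qed

definition shift_perm :: "nat \<Rightarrow> (nat \<Rightarrow> nat) \<Rightarrow> nat \<Rightarrow> nat" where
  "shift_perm m \<tau> = (\<lambda>i. if i < m then i else \<tau> (i - m) + m)"

lemma shift_perm_comp_transpose:
  "shift_perm m (Transposition.transpose a b \<circ> p) = Transposition.transpose (a + m) (b + m) \<circ> shift_perm m p"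
  by (auto simp: shift_perm_def fun_eq_iff Transposition.transpose_def)

lemma shift_perm_ident [simp]: "shift_perm m (\<lambda>x. x) = (\<lambda>x. x)"
  by (auto simp: shift_perm_def fun_eq_iff)

lemma shift_perm_permutes:
  assumes "\<tau> permutes {..<k}"
  shows "shift_perm m \<tau> permutes {..<m + k}"
  using assms finite_lessThan[of k]
proof (induction rule: permutes_induct)
  case id then show ?case using permutes_id by (simp add: id_def)
next
  case (swap a b p)
  then show ?case
    unfolding shift_perm_comp_transpose by (intro permutes_compose permutes_swap_id) auto
qed

lemma sign_shift_perm:
  assumes "\<tau> permutes {..<k}"
  shows "sign (shift_perm m \<tau>) = sign \<tau>"
  using assms finite_lessThan[of k]
proof (induction rule: permutes_induct)
  case id then show ?case by simp
next
  case (swap a b p)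
  have pp: "permutation p" using swap.hyps(4) by (rule permutes_imp_permutation[OF finite_lessThan])
  have ps: "permutation (shift_perm m p)"
    using shift_perm_permutes[OF swap.hyps(4), of m] by (rule permutes_imp_permutation[OF finite_lessThan])
  have "sign (shift_perm m (Transposition.transpose a b \<circ> p)) = sign (Transposition.transpose (a + m) (b + m)) * sign (shift_perm m p)"
    unfolding shift_perm_comp_transpose by (rule sign_compose[OF permutation_swap_id ps])
  also have "\<dots> = sign (Transposition.transpose a b) * sign p"
    using swap.hyps(3) swap.IH by (simp add: sign_swap_id)
  also have "\<dots> = sign (Transposition.transpose a b \<circ> p)"
    by (rule sign_compose[OF permutation_swap_id pp, symmetric])
  finally show ?case .
qed

lemma permute_list_shift_perm:
  assumes "\<tau> permutes {..<length xs - m}" "m \<le> length xs"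
  shows "permute_list (shift_perm m \<tau>) xs = take m xs @ permute_list \<tau> (drop m xs)"
proof (rule nth_equalityI)
  show "length (permute_list (shift_perm m \<tau>) xs) = length (take m xs @ permute_list \<tau> (drop m xs))"
    using assms by simp
  fix i assume i: "i < length (permute_list (shift_perm m \<tau>) xs)"
  show "permute_list (shift_perm m \<tau>) xs ! i = (take m xs @ permute_list \<tau> (drop m xs)) ! i"
  proof (cases "i < m")
    case True then show ?thesis using i assms by (simp add: permute_list_def shift_perm_def nth_append)
  next
    case False
    have "\<tau> (i - m) < length xs - m"
      using permutes_in_image[OF assms(1)] i False by simp
    then show ?thesis using i assms False
      by (simp add: permute_list_def shift_perm_def nth_append add.commute)
  qed
qed

lemma eps_shift_perm:
  assumes "\<tau> permutes {..<length bs - m}" "m \<le> length bs"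
  shows "eps (shift_perm m \<tau>) bs = eps \<tau> (drop m bs)"
proof -
  let ?I = "{(i, j). i < j \<and> j < length bs \<and> shift_perm m \<tau> j < shift_perm m \<tau> i \<and> bs ! (shift_perm m \<tau> i) \<and> bs ! (shift_perm m \<tau> j)}"
  let ?J = "{(i, j). i < j \<and> j < length (drop m bs) \<and> \<tau> j < \<tau> i \<and> drop m bs ! (\<tau> i) \<and> drop m bs ! (\<tau> j)}"
  have lt: "\<And>i. i < length bs - m \<Longrightarrow> \<tau> i < length bs - m"
    using permutes_in_image[OF assms(1)] by simp
  have "?I = (\<lambda>(i, j). (i + m, j + m)) ` ?J"
  proof
    show "?I \<subseteq> (\<lambda>(i, j). (i + m, j + m)) ` ?J"
    proof
      fix x assume x: "x \<in> ?I"
      then obtain i j where ij: "x = (i, j)" "i < j" "j < length bs"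
        "shift_perm m \<tau> j < shift_perm m \<tau> i" "bs ! (shift_perm m \<tau> i)" "bs ! (shift_perm m \<tau> j)" by auto
      have im: "\<not> i < m"
      proof
        assume "i < m"
        then show False using ij by (auto simp: shift_perm_def split: if_splits)
      qed
      then have jm: "\<not> j < m" using ij by simp
      have "(i - m, j - m) \<in> ?J" using ij im jm assms(2) by (auto simp: shift_perm_def add.commute)
      moreover have "x = (\<lambda>(i, j). (i + m, j + m)) (i - m, j - m)" using ij im jm by simp
      ultimately show "x \<in> (\<lambda>(i, j). (i + m, j + m)) ` ?J" by blast
    qed
    show "(\<lambda>(i, j). (i + m, j + m)) ` ?J \<subseteq> ?I"
      using assms(2) by (auto simp: shift_perm_def add.commute)
  qed
  moreover have "inj_on (\<lambda>(i, j). (i + m, j + m)) ?J" by (auto simp: inj_on_def)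
  ultimately have "card ?I = card ?J" by (simp add: card_image)
  then show ?thesis unfolding eps_def by simp
qed

definition front_perm :: "nat \<Rightarrow> nat \<Rightarrow> nat" where
  "front_perm i = (\<lambda>l. if l = 0 then i else if l \<le> i then l - 1 else l)"

lemma front_perm_0 [simp]: "front_perm 0 = id"
  by (auto simp: front_perm_def fun_eq_iff)

lemma front_perm_Suc: "front_perm (Suc i) = Transposition.transpose i (Suc i) \<circ> front_perm i"
  by (auto simp: front_perm_def fun_eq_iff Transposition.transpose_def)

lemma front_perm_permutes:
  assumes "i < n"
  shows "front_perm i permutes {..<n}"
  using assms
proof (induction i)
  case 0 show ?case by (simp only: front_perm_0) (rule permutes_id)
next
  case (Suc i)
  have "Transposition.transpose i (Suc i) permutes {..<n}"
    using Suc.prems by (intro permutes_swap_id) auto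
  then show ?case unfolding front_perm_Suc using Suc by (intro permutes_compose) auto
qed

lemma sign_front_perm:
  assumes "i < n"
  shows "sign (front_perm i) = (-1) ^ i"
  using assms
proof (induction i)
  case 0 then show ?case by simp
next
  case (Suc i)
  have p: "permutation (front_perm i)"
    using Suc.prems by (intro permutes_imp_permutation[OF finite_lessThan front_perm_permutes[of i n]]) simp
  have "sign (front_perm (Suc i)) = sign (Transposition.transpose i (Suc i)) * sign (front_perm i)"
    unfolding front_perm_Suc by (rule sign_compose[OF permutation_swap_id p])
  also have "\<dots> = - ((-1) ^ i)"
    using Suc by (simp add: sign_swap_id)
  finally show ?case by simp
qed

lemma permute_list_front_perm:
  assumes "i < length xs"
  shows "permute_list (front_perm i) xs = xs ! i # take i xs @ drop (Suc i) xs"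
proof (rule nth_equalityI)
  show "length (permute_list (front_perm i) xs) = length (xs ! i # take i xs @ drop (Suc i) xs)"
    using assms by simp
  fix l assume l: "l < length (permute_list (front_perm i) xs)"
  show "permute_list (front_perm i) xs ! l = (xs ! i # take i xs @ drop (Suc i) xs) ! l"
  proof (cases l)
    case 0 then show ?thesis using l by (simp add: permute_list_def front_perm_def)
  next
    case (Suc l')
    then show ?thesis using l assms
      by (auto simp: permute_list_def front_perm_def nth_append min_def)
  qed
qed

lemma power_card_True_eq_psgn_psum:
  "(-1::complex) ^ card {l. l < length cs \<and> cs ! l} = psgn (psum cs)"
proof (induction cs)
  case Nil then show ?case by simp
next
  case (Cons c cs)
  have eq: "{l. l < length (c # cs) \<and> (c # cs) ! l} = (if c then {0} else {}) \<union> Suc ` {l. l < length cs \<and> cs ! l}"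
  proof (rule set_eqI)
    fix l show "l \<in> {l. l < length (c # cs) \<and> (c # cs) ! l} \<longleftrightarrow> l \<in> (if c then {0} else {}) \<union> Suc ` {l. l < length cs \<and> cs ! l}"
      by (cases l) auto
  qed
  have "card {l. l < length (c # cs) \<and> (c # cs) ! l} = (if c then 1 else 0) + card {l. l < length cs \<and> cs ! l}"
    unfolding eq by (subst card_Un_disjoint) (auto simp: card_image)
  then show ?case using Cons by (cases c) (auto simp: psgn_def)
qed

lemma eps_front_perm:
  assumes "i < length bs"
  shows "eps (front_perm i) bs = psgn (bs ! i \<and> psum (take i bs))"
proof -
  let ?I = "{(a, b). a < b \<and> b < length bs \<and> front_perm i b < front_perm i a \<and> bs ! (front_perm i a) \<and> bs ! (front_perm i b)}"
  let ?J = "{l. l < i \<and> bs ! i \<and> bs ! l}"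
  have "?I = (\<lambda>l. (0, Suc l)) ` ?J"
  proof
    show "?I \<subseteq> (\<lambda>l. (0, Suc l)) ` ?J"
    proof
      fix x assume "x \<in> ?I"
      then obtain a b where ab: "x = (a, b)" "a < b" "b < length bs" "front_perm i b < front_perm i a"
        "bs ! (front_perm i a)" "bs ! (front_perm i b)" by auto
      have a0: "a = 0" using ab by (auto simp: front_perm_def split: if_splits)
      then have "b \<le> i" using ab by (auto simp: front_perm_def split: if_splits)
      then have "b - 1 \<in> ?J" "x = (0, Suc (b - 1))" using ab a0 by (auto simp: front_perm_def split: if_splits)
      then show "x \<in> (\<lambda>l. (0, Suc l)) ` ?J" by blast
    qed
    show "(\<lambda>l. (0, Suc l)) ` ?J \<subseteq> ?I"
      using assms by (auto simp: front_perm_def)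
  qed
  then have "card ?I = card ?J" by (simp add: card_image inj_on_def)
  moreover have "card ?J = (if bs ! i then card {l. l < length (take i bs) \<and> take i bs ! l} else 0)"
    using assms by (auto intro: arg_cong[where f=card])
  ultimately show ?thesis
    unfolding eps_def using power_card_True_eq_psgn_psum[of "take i bs"] by (auto simp: psgn_def)
qed

lemma permute_list_update:
  assumes s: "\<sigma> permutes {..<length xs}" and j: "j < length xs"
  shows "permute_list \<sigma> (xs[j := v]) = (permute_list \<sigma> xs)[inv \<sigma> j := v]"
proof (rule nth_equalityI)
  show "length (permute_list \<sigma> (xs[j := v])) = length ((permute_list \<sigma> xs)[inv \<sigma> j := v])" by simp
  fix i assume i: "i < length (permute_list \<sigma> (xs[j := v]))"
  then have i': "i < length xs" by simp
  have si: "\<sigma> i < length xs" using permutes_in_image[OF s] i' by simp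
  have eq: "\<sigma> i = j \<longleftrightarrow> i = inv \<sigma> j" using permutes_inv_eq[OF s] by metis
  show "permute_list \<sigma> (xs[j := v]) ! i = (permute_list \<sigma> xs)[inv \<sigma> j := v] ! i"
    using i' si eq permute_list_nth[of \<sigma> "xs[j:=v]" i] permute_list_nth[OF s i'] s
    by (auto simp: nth_list_update)
qed

lemma inv_permutes_less:
  assumes s: "\<sigma> permutes {..<n}" and j: "j < n"
  shows "inv \<sigma> j < n"
  using permutes_in_image[OF permutes_inv[OF s]] j by simp

section \<open>Super-alternation\<close>

definition super_alt :: "nat \<Rightarrow> (bool list \<Rightarrow> 'g list \<Rightarrow> complex) \<Rightarrow> bool list \<Rightarrow> 'g list \<Rightarrow> complex" where
  "super_alt n H bs xs = (\<Sum>\<rho>\<in>{\<rho>. \<rho> permutes {..<n}}. of_int (sign \<rho>) * eps \<rho> bs * H (permute_list \<rho> bs) (permute_list \<rho> xs))"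

definition perm_act :: "(nat \<Rightarrow> nat) \<Rightarrow> (bool list \<Rightarrow> 'a list \<Rightarrow> complex) \<Rightarrow> bool list \<Rightarrow> 'a list \<Rightarrow> complex" where
  "perm_act \<sigma> H cs ys = of_int (sign \<sigma>) * eps \<sigma> cs * H (permute_list \<sigma> cs) (permute_list \<sigma> ys)"

lemma perm_act_front_perm:
  assumes i: "i < length cs" and l: "length ys = length cs"
  shows "perm_act (front_perm i) H cs ys = (-1) ^ i * psgn (cs ! i \<and> psum (take i cs)) *
    H (cs ! i # take i cs @ drop (Suc i) cs) (ys ! i # take i ys @ drop (Suc i) ys)"
  using sign_front_perm[OF i] eps_front_perm[OF i] permute_list_front_perm[OF i] permute_list_front_perm[of i ys] i l
  by (simp add: perm_act_def)

lemma super_alt_reindex: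
  assumes s: "\<sigma> permutes {..<n}" and l: "length bs = n" "length xs = n"
  shows "super_alt n H bs xs = super_alt n (perm_act \<sigma> H) bs xs"
proof -
  have "super_alt n (\<lambda>cs ys. of_int (sign \<sigma>) * eps \<sigma> cs * H (permute_list \<sigma> cs) (permute_list \<sigma> ys)) bs xs
     = (\<Sum>\<rho>\<in>{\<rho>. \<rho> permutes {..<n}}. of_int (sign (\<rho> \<circ> \<sigma>)) * eps (\<rho> \<circ> \<sigma>) bs * H (permute_list (\<rho> \<circ> \<sigma>) bs) (permute_list (\<rho> \<circ> \<sigma>) xs))"
    unfolding super_alt_def
  proof (rule sum.cong[OF refl])
    fix \<rho> assume r: "\<rho> \<in> {\<rho>. \<rho> permutes {..<n}}"
    then have r': "\<rho> permutes {..<n}" by simp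
    have pr: "permutation \<rho>" "permutation \<sigma>" using r' s by (auto intro: permutes_imp_permutation[OF finite_lessThan])
    have "eps (\<rho> \<circ> \<sigma>) bs = eps \<rho> bs * eps \<sigma> (permute_list \<rho> bs)"
      using eps_compose[of \<rho> bs \<sigma>] r' s l(1) by simp
    moreover have "permute_list (\<rho> \<circ> \<sigma>) bs = permute_list \<sigma> (permute_list \<rho> bs)"
      using permute_list_compose[of \<sigma> bs \<rho>] s l(1) by simp
    moreover have "permute_list (\<rho> \<circ> \<sigma>) xs = permute_list \<sigma> (permute_list \<rho> xs)"
      using permute_list_compose[of \<sigma> xs \<rho>] s l(2) by simp
    moreover have "sign (\<rho> \<circ> \<sigma>) = sign \<rho> * sign \<sigma>" using pr by (simp add: sign_compose)
    ultimately show "of_int (sign \<rho>) * eps \<rho> bs * (of_int (sign \<sigma>) * eps \<sigma> (permute_list \<rho> bs) *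
          H (permute_list \<sigma> (permute_list \<rho> bs)) (permute_list \<sigma> (permute_list \<rho> xs))) =
        of_int (sign (\<rho> \<circ> \<sigma>)) * eps (\<rho> \<circ> \<sigma>) bs * H (permute_list (\<rho> \<circ> \<sigma>) bs) (permute_list (\<rho> \<circ> \<sigma>) xs)"
      by (simp only: of_int_mult mult_ac)
  qed
  also have "\<dots> = super_alt n H bs xs"
    unfolding super_alt_def
    by (rule sum_permutations_compose_right[OF s, of "\<lambda>\<rho>. of_int (sign \<rho>) * eps \<rho> bs * H (permute_list \<rho> bs) (permute_list \<rho> xs)", symmetric])
  finally show ?thesis by (simp add: perm_act_def[abs_def])
qed

lemma card_permutes_lessThan: "card {\<sigma>. \<sigma> permutes {..<n}} = fact n"
  using card_permutations[of "{..<n}" n] by simp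

lemma super_alt_cong_permutes:
  assumes "\<And>\<sigma>. \<sigma> permutes {..<n} \<Longrightarrow>
      H1 (permute_list \<sigma> bs) (permute_list \<sigma> xs) = H2 (permute_list \<sigma> bs) (permute_list \<sigma> xs)"
  shows "super_alt n H1 bs xs = super_alt n H2 bs xs"
  unfolding super_alt_def using assms by (intro sum.cong) auto

lemma super_alt_sum: "super_alt n (\<lambda>cs ys. \<Sum>j\<in>J. H j cs ys) bs xs = (\<Sum>j\<in>J. super_alt n (H j) bs xs)"
  unfolding super_alt_def by (simp add: sum_distrib_left sum.swap[of _ J])

lemma super_alt_add: "super_alt n (\<lambda>cs ys. H1 cs ys + H2 cs ys) bs xs = super_alt n H1 bs xs + super_alt n H2 bs xs"
  unfolding super_alt_def by (simp add: algebra_simps sum.distrib)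

lemma super_alt_scale: "super_alt n (\<lambda>cs ys. c * H cs ys) bs xs = c * super_alt n H bs xs"
  unfolding super_alt_def by (simp add: sum_distrib_left mult_ac)

lemma super_alt_minus: "super_alt n (\<lambda>cs ys. - H cs ys) bs xs = - super_alt n H bs xs"
  unfolding super_alt_def by (simp add: sum_negf)

lemma super_alt_zero: "super_alt n (\<lambda>cs ys. 0) bs xs = 0"
  unfolding super_alt_def by simp

lemma permute_list_compose_shift_perm:
  assumes s: "\<sigma> permutes {..<length xs}" and t: "\<tau> permutes {..<length xs - m}" and m: "m \<le> length xs"
  shows "permute_list (\<sigma> \<circ> shift_perm m \<tau>) xs = take m (permute_list \<sigma> xs) @ permute_list \<tau> (drop m (permute_list \<sigma> xs))"
proof -
  have "shift_perm m \<tau> permutes {..<length xs}"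
    using shift_perm_permutes[OF t, of m] m by simp
  then show ?thesis
    using permute_list_compose[of "shift_perm m \<tau>" xs \<sigma>] permute_list_shift_perm[of \<tau> "permute_list \<sigma> xs" m] t m
    by simp
qed

lemma eps_compose_shift_perm:
  assumes s: "\<sigma> permutes {..<length bs}" and t: "\<tau> permutes {..<length bs - m}" and m: "m \<le> length bs"
  shows "eps (\<sigma> \<circ> shift_perm m \<tau>) bs = eps \<sigma> bs * eps \<tau> (drop m (permute_list \<sigma> bs))"
proof -
  have "shift_perm m \<tau> permutes {..<length bs}"
    using shift_perm_permutes[OF t, of m] m by simp
  then show ?thesis
    using eps_compose[OF s] eps_shift_perm[of \<tau> "permute_list \<sigma> bs" m] t m by simp
qed

text \<open>Alternating first over all \<open>n\<close> slots and then over the last \<open>n - 2\<close> of them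
  counts every permutation \<open>(n - 2)!\<close> times.\<close>

lemma super_alt_iterated:
  assumes lb: "length bs = n" and lx: "length xs = n" and n2: "2 \<le> n"
  shows "super_alt n (\<lambda>cs ys. super_alt (n - 2) (\<lambda>cs' ys'. H (take 2 cs @ cs') (take 2 ys @ ys')) (drop 2 cs) (drop 2 ys)) bs xs
    = of_nat (fact (n - 2)) * super_alt n H bs xs"
proof -
  let ?S = "{\<sigma>. \<sigma> permutes {..<n}}" and ?T = "{\<tau>. \<tau> permutes {..<n - 2}}"
  define f where "f \<rho> = of_int (sign \<rho>) * eps \<rho> bs * H (permute_list \<rho> bs) (permute_list \<rho> xs)" for \<rho>
  have pt: "shift_perm 2 \<tau> permutes {..<n}" if "\<tau> \<in> ?T" for \<tau>
    using shift_perm_permutes[of \<tau> "n - 2" 2] that le_add_diff_inverse[OF n2] by simp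
  have eq: "of_int (sign \<sigma>) * eps \<sigma> bs *
      (of_int (sign \<tau>) * eps \<tau> (drop 2 (permute_list \<sigma> bs)) *
          H (take 2 (permute_list \<sigma> bs) @ permute_list \<tau> (drop 2 (permute_list \<sigma> bs)))
            (take 2 (permute_list \<sigma> xs) @ permute_list \<tau> (drop 2 (permute_list \<sigma> xs))))
     = f (\<sigma> \<circ> shift_perm 2 \<tau>)" if s: "\<sigma> \<in> ?S" and t: "\<tau> \<in> ?T" for \<sigma> \<tau>
  proof -
    have "sign (\<sigma> \<circ> shift_perm 2 \<tau>) = sign \<sigma> * sign \<tau>"
      using sign_compose[OF permutes_imp_permutation[OF finite_lessThan] permutes_imp_permutation[OF finite_lessThan pt[OF t]]]
        sign_shift_perm[of \<tau> "n - 2" 2] s t by simp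
    then show ?thesis
      unfolding f_def
      using eps_compose_shift_perm[of \<sigma> bs \<tau> 2] permute_list_compose_shift_perm[of \<sigma> bs \<tau> 2]
        permute_list_compose_shift_perm[of \<sigma> xs \<tau> 2] s t lb lx n2
      by (simp add: algebra_simps)
  qed
  have "super_alt n (\<lambda>cs ys. super_alt (n - 2) (\<lambda>cs' ys'. H (take 2 cs @ cs') (take 2 ys @ ys')) (drop 2 cs) (drop 2 ys)) bs xs
    = (\<Sum>\<sigma>\<in>?S. \<Sum>\<tau>\<in>?T. f (\<sigma> \<circ> shift_perm 2 \<tau>))"
    unfolding super_alt_def[of n] super_alt_def[of "n - 2"] sum_distrib_left
    using lb lx by (intro sum.cong refl eq) auto
  also have "\<dots> = (\<Sum>\<tau>\<in>?T. \<Sum>\<sigma>\<in>?S. f (\<sigma> \<circ> shift_perm 2 \<tau>))" by (rule sum.swap)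
  also have "\<dots> = (\<Sum>\<tau>\<in>?T. \<Sum>\<rho>\<in>?S. f \<rho>)"
    by (intro sum.cong refl sum_permutations_compose_right[symmetric] pt)
  also have "\<dots> = of_nat (fact (n - 2)) * super_alt n H bs xs"
    by (simp add: card_permutes_lessThan super_alt_def f_def)
  finally show ?thesis .
qed

lemma sum_permutes_eps_compose_left:
  assumes t: "\<tau> permutes {..<length bs}" and l: "length xs = length bs"
  shows "eps \<tau> bs * (\<Sum>\<sigma>\<in>{\<sigma>. \<sigma> permutes {..<length bs}}.
            eps \<sigma> (permute_list \<tau> bs) * K (permute_list \<sigma> (permute_list \<tau> bs)) (permute_list \<sigma> (permute_list \<tau> xs)))
       = (\<Sum>\<sigma>\<in>{\<sigma>. \<sigma> permutes {..<length bs}}. eps \<sigma> bs * K (permute_list \<sigma> bs) (permute_list \<sigma> xs))"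
proof -
  have "eps \<tau> bs * (\<Sum>\<sigma>\<in>{\<sigma>. \<sigma> permutes {..<length bs}}.
            eps \<sigma> (permute_list \<tau> bs) * K (permute_list \<sigma> (permute_list \<tau> bs)) (permute_list \<sigma> (permute_list \<tau> xs)))
      = (\<Sum>\<sigma>\<in>{\<sigma>. \<sigma> permutes {..<length bs}}.
            eps (\<tau> \<circ> \<sigma>) bs * K (permute_list (\<tau> \<circ> \<sigma>) bs) (permute_list (\<tau> \<circ> \<sigma>) xs))"
    unfolding sum_distrib_left
    using eps_compose[OF t] permute_list_compose[of _ bs \<tau>] permute_list_compose[of _ xs \<tau>] l
    by (intro sum.cong) (auto simp: mult.assoc)
  also have "\<dots> = (\<Sum>\<sigma>\<in>{\<sigma>. \<sigma> permutes {..<length bs}}. eps \<sigma> bs * K (permute_list \<sigma> bs) (permute_list \<sigma> xs))"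
    by (rule setum_permutations_compose_left[OF t, symmetric])
  finally show ?thesis .
qed

context lie_superalg
begin

section \<open>Supersymmetric forms\<close>

lemma homlist_Nil [simp]: "homlist G0 G1 [] []"
  by (simp add: homlist_def)

lemma homlist_Cons [simp]: "homlist G0 G1 (b # bs) (x # xs) \<longleftrightarrow> x \<in> gpart b \<and> homlist G0 G1 bs xs"
  by (auto simp: homlist_def nth_Cons split: nat.splits)

lemma homlist_nth: "homlist G0 G1 bs xs \<Longrightarrow> i < length xs \<Longrightarrow> xs ! i \<in> gpart (bs ! i)"
  by (simp add: homlist_def)

lemma homlist_append [simp]:
  "length bs = length xs \<Longrightarrow> homlist G0 G1 (bs @ cs) (xs @ ys) \<longleftrightarrow> homlist G0 G1 bs xs \<and> homlist G0 G1 cs ys"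
  by (induction bs xs rule: list_induct2) auto

lemma homlist_take: "homlist G0 G1 bs xs \<Longrightarrow> homlist G0 G1 (take a bs) (take a xs)"
  by (auto simp: homlist_def)

lemma homlist_permute:
  assumes "homlist G0 G1 bs xs" "\<sigma> permutes {..<length xs}"
  shows "homlist G0 G1 (permute_list \<sigma> bs) (permute_list \<sigma> xs)"
proof -
  have l: "length bs = length xs" using assms(1) by (simp add: homlist_def)
  show ?thesis
    unfolding homlist_def
  proof (intro conjI allI impI)
    show "length (permute_list \<sigma> bs) = length (permute_list \<sigma> xs)" using l by simp
    fix i assume i: "i < length (permute_list \<sigma> xs)"
    have si: "\<sigma> i < length xs" using permutes_in_image[OF assms(2)] i by simp
    show "permute_list \<sigma> xs ! i \<in> gpart (permute_list \<sigma> bs ! i)"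
      using i si l assms(1) permute_list_nth[OF assms(2)] permute_list_nth[of \<sigma> bs] assms(2)
      by (simp add: homlist_def)
  qed
qed

lemma super_alt_cong:
  assumes h: "homlist G0 G1 bs xs" and l: "length xs = n"
    and eq: "\<And>cs ys. homlist G0 G1 cs ys \<Longrightarrow> length ys = n \<Longrightarrow> H1 cs ys = H2 cs ys"
  shows "super_alt n H1 bs xs = super_alt n H2 bs xs"
  using homlist_permute[OF h] l by (intro super_alt_cong_permutes eq) auto

lemma Pforms_lincomb:
  assumes F: "F \<in> Pforms scale G0 G1" and G: "G \<in> Pforms scale G0 G1"
  shows "(\<lambda>xs. c * F xs + G xs) \<in> Pforms scale G0 G1"
proof -
  have mF: "multilin scale F" and mG: "multilin scale G"
    using F G by (auto simp: Pforms_def)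
  obtain N1 where N1: "\<forall>xs. N1 < length xs \<longrightarrow> F xs = 0" using F by (auto simp: Pforms_def fin_order_def)
  obtain N2 where N2: "\<forall>xs. N2 < length xs \<longrightarrow> G xs = 0" using G by (auto simp: Pforms_def fin_order_def)
  have sF: "supersym G0 G1 F" and sG: "supersym G0 G1 G" using F G by (auto simp: Pforms_def)
  have "multilin scale (\<lambda>xs. c * F xs + G xs)"
    using mF mG unfolding multilin_def by (simp add: algebra_simps)
  moreover have "fin_order (\<lambda>xs. c * F xs + G xs)"
    unfolding fin_order_def using N1 N2 by (intro exI[of _ "max N1 N2"]) auto
  moreover have "supersym G0 G1 (\<lambda>xs. c * F xs + G xs)"
    using sF sG unfolding supersym_def by (simp add: algebra_simps)
  ultimately show ?thesis by (simp add: Pforms_def)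
qed

lemma Pforms_zero: "(\<lambda>_. 0) \<in> Pforms scale G0 G1"
  by (simp add: Pforms_def multilin_def fin_order_def supersym_def)

lemma Pforms_sum:
  assumes "\<And>i. i \<in> I \<Longrightarrow> F i \<in> Pforms scale G0 G1"
  shows "(\<lambda>xs. \<Sum>i\<in>I. c i * F i xs) \<in> Pforms scale G0 G1"
  using assms
proof (induction I rule: infinite_finite_induct)
  case (infinite A) then show ?case by (simp add: Pforms_zero)
next
  case empty then show ?case by (simp add: Pforms_zero)
next
  case (insert a A)
  have "(\<lambda>xs. c a * F a xs + (\<lambda>xs. \<Sum>i\<in>A. c i * F i xs) xs) \<in> Pforms scale G0 G1"
    using insert by (intro Pforms_lincomb) auto
  then show ?case using insert by simp
qed

definition order_part :: "nat \<Rightarrow> ('g list \<Rightarrow> complex) \<Rightarrow> 'g list \<Rightarrow> complex" where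
  "order_part k F = (\<lambda>xs. if length xs = k then F xs else 0)"

lemma Pforms_order_part:
  assumes "F \<in> Pforms scale G0 G1"
  shows "order_part k F \<in> Pforms scale G0 G1"
proof -
  have "multilin scale (order_part k F)"
    using assms unfolding Pforms_def multilin_def order_part_def by simp
  moreover have "fin_order (order_part k F)"
    by (auto simp: fin_order_def order_part_def intro!: exI[of _ k])
  moreover have "supersym G0 G1 (order_part k F)"
    using assms unfolding Pforms_def supersym_def order_part_def by simp
  ultimately show ?thesis by (simp add: Pforms_def)
qed

lemma sum_order_parts:
  assumes "F \<in> Pforms scale G0 G1"
  obtains N where "F = (\<lambda>xs. \<Sum>k\<in>{..N}. 1 * order_part k F xs)"
proof -
  obtain N where N: "\<forall>xs. N < length xs \<longrightarrow> F xs = 0" using assms by (auto simp: Pforms_def fin_order_def)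
  have "F xs = (\<Sum>k\<in>{..N}. 1 * order_part k F xs)" for xs
  proof (cases "length xs \<le> N")
    case True
    then have "(\<Sum>k\<in>{..N}. 1 * order_part k F xs) = (\<Sum>k\<in>{length xs}. F xs)"
      by (intro sum.mono_neutral_cong_right) (auto simp: order_part_def)
    then show ?thesis by simp
  next
    case False
    then show ?thesis using N by (auto simp: order_part_def)
  qed
  then show ?thesis using that by blast
qed

definition hbasis :: "bool \<Rightarrow> 'g set" where
  "hbasis b = (SOME B. B \<subseteq> gpart b \<and> independent B \<and> gpart b \<subseteq> span B)"

lemma hbasis_props: "hbasis b \<subseteq> gpart b" "independent (hbasis b)" "gpart b \<subseteq> span (hbasis b)"
proof -
  obtain B where "B \<subseteq> gpart b" "independent B" "gpart b \<subseteq> span B"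
    by (rule maximal_independent_subset[of "gpart b"])
  then have "\<exists>B. B \<subseteq> gpart b \<and> independent B \<and> gpart b \<subseteq> span B" by blast
  from someI_ex[OF this] show "hbasis b \<subseteq> gpart b" "independent (hbasis b)" "gpart b \<subseteq> span (hbasis b)"
    unfolding hbasis_def by blast+
qed

lemma finite_hbasis: "finite (hbasis b)"
proof -
  obtain T where T: "finite T" "span T = UNIV" using finite_spanning_set by blast
  show ?thesis using independent_span_bound[OF T(1) hbasis_props(2), of b] T(2) by simp
qed

definition hbasis_index :: "(bool \<times> 'g) set" where "hbasis_index = {(b, e). e \<in> hbasis b}"

definition coord :: "bool \<times> 'g \<Rightarrow> 'g \<Rightarrow> complex" where
  "coord i x = representation (hbasis (fst i)) (gproj (fst i) x) (snd i)"

lemma hbasis_index_split: "hbasis_index = Pair False ` hbasis False \<union> Pair True ` hbasis True"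
  unfolding hbasis_index_def by (auto simp: image_iff) (metis (full_types))

lemma hbasis_index_gpart: "i \<in> hbasis_index \<Longrightarrow> snd i \<in> gpart (fst i)"
  by (cases i) (auto simp: hbasis_index_def dest: subsetD[OF hbasis_props(1)])

lemma gproj_in_span: "gproj b x \<in> span (hbasis b)"
  using hbasis_props(3) gproj_in by blast

lemma coord_linear: "coord i (scale c x + y) = c * coord i x + coord i y"
proof -
  let ?B = "hbasis (fst i)" and ?b = "fst i"
  have "representation ?B (scale c (gproj ?b x) + gproj ?b y)
      = (\<lambda>e. representation ?B (scale c (gproj ?b x)) e + representation ?B (gproj ?b y) e)"
    by (rule representation_add[OF hbasis_props(2) gproj_in_span span_scale[OF gproj_in_span]])
  moreover have "representation ?B (scale c (gproj ?b x)) = (\<lambda>e. c * representation ?B (gproj ?b x) e)"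
    by (rule representation_scale[OF hbasis_props(2) gproj_in_span])
  ultimately show ?thesis unfolding coord_def gproj_linear by simp
qed

lemma sum_Pair: "(\<Sum>i\<in>Pair b ` B. f i) = (\<Sum>e\<in>B. f (b, e))"
  by (subst sum.reindex) (auto simp: inj_on_def)

lemma coord_other_gpart: "x \<in> gpart p \<Longrightarrow> fst i \<noteq> p \<Longrightarrow> coord i x = 0"
  unfolding coord_def using gproj_other_gpart[of x p "fst i"] by (simp add: representation_zero)

lemma sum_coord_scale: "(\<Sum>i\<in>hbasis_index. scale (coord i x) (snd i)) = x"
proof -
  have "(\<Sum>i\<in>hbasis_index. scale (coord i x) (snd i))
      = (\<Sum>i\<in>Pair False ` hbasis False. scale (coord i x) (snd i)) + (\<Sum>i\<in>Pair True ` hbasis True. scale (coord i x) (snd i))"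
    unfolding hbasis_index_split using finite_hbasis by (intro sum.union_disjoint) auto
  also have "\<dots> = (\<Sum>e\<in>hbasis False. scale (representation (hbasis False) (gproj False x) e) e)
      + (\<Sum>e\<in>hbasis True. scale (representation (hbasis True) (gproj True x) e) e)"
    by (simp add: sum_Pair coord_def)
  also have "\<dots> = gproj False x + gproj True x"
    using sum_representation_eq[OF hbasis_props(2) gproj_in_span finite_hbasis order_refl] by simp
  finally show ?thesis by (simp add: gproj_False_add_True)
qed

definition coord_form :: "bool \<times> 'g \<Rightarrow> 'g list \<Rightarrow> complex" where
  "coord_form i = (\<lambda>xs. if length xs = 1 then coord i (hd xs) else 0)"

lemma coord_form_gdual: "coord_form i \<in> gdual scale"
  unfolding gdual_def
proof (intro CollectI conjI allI impI)
  show "multilin scale (coord_form i)"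
    unfolding multilin_def
  proof (intro allI)
    fix xs ys :: "'g list" and c x y
    show "coord_form i (xs @ (scale c x + y) # ys) = c * coord_form i (xs @ x # ys) + coord_form i (xs @ y # ys)"
      by (cases "xs = [] \<and> ys = []") (auto simp: coord_form_def coord_linear)
  qed
  fix xs :: "'g list" assume "length xs \<noteq> 1"
  then show "coord_form i xs = 0" by (simp add: coord_form_def)
qed

lemma gdual_Pforms:
  assumes "\<phi> \<in> gdual scale"
  shows "\<phi> \<in> Pforms scale G0 G1"
proof -
  have m: "multilin scale \<phi>" and z: "\<And>xs. length xs \<noteq> 1 \<Longrightarrow> \<phi> xs = 0"
    using assms by (auto simp: gdual_def)
  have "fin_order \<phi>" unfolding fin_order_def using z by (intro exI[of _ 1]) auto
  moreover have "supersym G0 G1 \<phi>"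
    unfolding supersym_def
  proof (intro allI impI)
    fix bs xs \<sigma> assume h: "homlist G0 G1 bs xs" and s: "\<sigma> permutes {..<length xs}"
    show "eps \<sigma> bs * \<phi> (permute_list \<sigma> xs) = \<phi> xs"
    proof (cases "length xs = 1")
      case True
      then have "\<sigma> = id" using s by (simp add: lessThan_Suc)
      then show ?thesis by simp
    next
      case False then show ?thesis using z by simp
    qed
  qed
  ultimately show ?thesis using m by (simp add: Pforms_def)
qed

end

section \<open>The map s, contractions and products\<close>

locale lie_superalg_s_map = lie_superalg scale G0 G1 br
  for scale :: "complex \<Rightarrow> 'g::ab_group_add \<Rightarrow> 'g" and G0 G1 br +
  fixes s :: "('g list \<Rightarrow> complex) \<Rightarrow> ('g list \<Rightarrow> complex)"
  assumes s_map: "is_s_map scale G0 G1 br s"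
begin

lemma s_Aforms: "F \<in> Pforms scale G0 G1 \<Longrightarrow> s F \<in> Aforms scale G0 G1"
  using s_map by (simp add: is_s_map_def)

lemma multilin_s: "F \<in> Pforms scale G0 G1 \<Longrightarrow> multilin scale (s F)"
  using s_Aforms by (simp add: Aforms_def)

lemma s_lincomb: "F \<in> Pforms scale G0 G1 \<Longrightarrow> G \<in> Pforms scale G0 G1 \<Longrightarrow>
   s (\<lambda>xs. c * F xs + G xs) = (\<lambda>xs. c * s F xs + s G xs)"
  using s_map by (simp add: is_s_map_def)

lemma s_mult: "F \<in> Pforms scale G0 G1 \<Longrightarrow> G \<in> Pforms scale G0 G1 \<Longrightarrow>
   s (sprod G0 G1 F G) = wprod G0 G1 (s F) (s G)"
  using s_map by (simp add: is_s_map_def)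

lemma s_const: "s (constf c) = constf c"
  using s_map by (simp add: is_s_map_def)

lemma s_gdual: "\<phi> \<in> gdual scale \<Longrightarrow> s \<phi> = dform G0 G1 br \<phi>"
  using s_map by (simp add: is_s_map_def)

lemma s_zero: "s (\<lambda>_. 0) = (\<lambda>_. 0)"
proof -
  have "s (\<lambda>xs. (-1) * (\<lambda>_. 0) xs + (\<lambda>_. 0) xs) = (\<lambda>xs. (-1) * s (\<lambda>_. 0) xs + s (\<lambda>_. 0) xs)"
    by (rule s_lincomb[OF Pforms_zero Pforms_zero])
  then show ?thesis by simp
qed

lemma s_sum:
  assumes "\<And>i. i \<in> I \<Longrightarrow> F i \<in> Pforms scale G0 G1"
  shows "s (\<lambda>xs. \<Sum>i\<in>I. c i * F i xs) = (\<lambda>xs. \<Sum>i\<in>I. c i * s (F i) xs)"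
  using assms
proof (induction I rule: infinite_finite_induct)
  case (infinite A) then show ?case by (simp add: s_zero)
next
  case empty then show ?case by (simp add: s_zero)
next
  case (insert a A)
  have P: "(\<lambda>xs. \<Sum>i\<in>A. c i * F i xs) \<in> Pforms scale G0 G1"
    using insert by (intro Pforms_sum) auto
  have "s (\<lambda>xs. c a * F a xs + (\<lambda>xs. \<Sum>i\<in>A. c i * F i xs) xs)
      = (\<lambda>xs. c a * s (F a) xs + s (\<lambda>xs. \<Sum>i\<in>A. c i * F i xs) xs)"
    using insert P by (intro s_lincomb) auto
  then show ?case using insert by simp
qed

end

context lie_superalg
begin

definition contr :: "bool \<Rightarrow> 'g \<Rightarrow> ('g list \<Rightarrow> complex) \<Rightarrow> 'g list \<Rightarrow> complex" where
  "contr p Z Q = hext G0 G1 (\<lambda>cs ys. psgn (p \<and> psum cs) * Q (Z # ys))"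

lemma contr_homlist:
  assumes "multilin scale Q" "homlist G0 G1 cs ys"
  shows "contr p Z Q ys = psgn (p \<and> psum cs) * Q (Z # ys)"
  unfolding contr_def
proof (rule hext_homlist[OF assms(2)])
  fix cs' :: "bool list" and ys' :: "'g list" and i assume "length cs' = length ys'" "length ys' = length ys" "i < length ys'" "ys' ! i = 0"
  then have "Q (Z # ys') = 0" using multilin_zero_entry[OF assms(1), of "Suc i" "Z # ys'"] by simp
  then show "psgn (p \<and> psum cs') * Q (Z # ys') = 0" by simp
qed

lemma contr_order:
  assumes "\<And>xs. length xs \<noteq> Suc k \<Longrightarrow> Q xs = 0" "length ys \<noteq> k"
  shows "contr p Z Q ys = 0"
  using assms unfolding contr_def hext_def by simp

lemma supersym_Cons:
  assumes sQ: "supersym G0 G1 Q" and Z: "Z \<in> gpart p"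
    and h: "homlist G0 G1 bs xs" and s: "\<sigma> permutes {..<length xs}"
  shows "eps \<sigma> bs * Q (Z # permute_list \<sigma> xs) = Q (Z # xs)"
proof -
  have lb: "length bs = length xs" using h by (simp add: homlist_def)
  have "shift_perm 1 \<sigma> permutes {..<length (Z # xs)}"
    using shift_perm_permutes[OF s, of 1] by simp
  then have "eps (shift_perm 1 \<sigma>) (p # bs) * Q (permute_list (shift_perm 1 \<sigma>) (Z # xs)) = Q (Z # xs)"
    using sQ h Z unfolding supersym_def by simp
  moreover have "permute_list (shift_perm 1 \<sigma>) (Z # xs) = Z # permute_list \<sigma> xs"
    using permute_list_shift_perm[of \<sigma> "Z # xs" 1] s by simp
  moreover have "eps (shift_perm 1 \<sigma>) (p # bs) = eps \<sigma> bs"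
    using eps_shift_perm[of \<sigma> "p # bs" 1] s lb by simp
  ultimately show ?thesis by simp
qed

lemma Pforms_contr:
  assumes Q: "Q \<in> Pforms scale G0 G1" and Z: "Z \<in> gpart p"
  shows "contr p Z Q \<in> Pforms scale G0 G1"
proof -
  have mQ: "multilin scale Q" using Q by (simp add: Pforms_def)
  obtain N where N: "\<forall>xs. N < length xs \<longrightarrow> Q xs = 0" using Q by (auto simp: Pforms_def fin_order_def)
  have sQ: "supersym G0 G1 Q" using Q by (simp add: Pforms_def)
  have "multilin scale (contr p Z Q)"
    unfolding contr_def
  proof (rule hext_multilin)
    fix ys :: "'g list" and cs :: "bool list" and j c x y
    assume "length cs = length ys" "j < length ys"
    then have "Q ((Z # ys)[Suc j := scale c x + y]) = c * Q ((Z # ys)[Suc j := x]) + Q ((Z # ys)[Suc j := y])"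
      using multilin_update[OF mQ, of "Suc j" "Z # ys"] by simp
    then show "psgn (p \<and> psum cs) * Q (Z # ys[j := scale c x + y]) =
       c * (psgn (p \<and> psum cs) * Q (Z # ys[j := x])) + psgn (p \<and> psum cs) * Q (Z # ys[j := y])"
      by (simp add: algebra_simps)
  qed
  moreover have "fin_order (contr p Z Q)"
    unfolding fin_order_def contr_def hext_def using N by (intro exI[of _ N]) auto
  moreover have "supersym G0 G1 (contr p Z Q)"
    unfolding supersym_def
  proof (intro allI impI)
    fix bs xs \<sigma> assume h: "homlist G0 G1 bs xs" and s: "\<sigma> permutes {..<length xs}"
    have lb: "length bs = length xs" using h by (simp add: homlist_def)
    have h2: "homlist G0 G1 (permute_list \<sigma> bs) (permute_list \<sigma> xs)" by (rule homlist_permute[OF h s])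
    have e: "eps \<sigma> bs * Q (Z # permute_list \<sigma> xs) = Q (Z # xs)"
      by (rule supersym_Cons[OF sQ Z h s])
    show "eps \<sigma> bs * contr p Z Q (permute_list \<sigma> xs) = contr p Z Q xs"
      using contr_homlist[OF mQ h2] contr_homlist[OF mQ h] psum_permute[of \<sigma> bs] s lb e
      by (simp add: algebra_simps)
  qed
  ultimately show ?thesis by (simp add: Pforms_def)
qed

lemma sum_coord_contr:
  assumes Q: "Q \<in> Pforms scale G0 G1" and Z: "Z \<in> gpart p"
  shows "(\<lambda>xs. \<Sum>i\<in>hbasis_index. coord i Z * contr (fst i) (snd i) Q xs) = contr p Z Q"
proof (rule multilin_eqI_homlist)
  have mQ: "multilin scale Q" using Q by (simp add: Pforms_def)
  show "multilin scale (\<lambda>xs. \<Sum>i\<in>hbasis_index. coord i Z * contr (fst i) (snd i) Q xs)"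
    using Pforms_sum[of hbasis_index "\<lambda>i. contr (fst i) (snd i) Q" "\<lambda>i. coord i Z"] Pforms_contr[OF Q] hbasis_index_gpart
    by (simp add: Pforms_def)
  show "multilin scale (contr p Z Q)" using Pforms_contr[OF Q Z] by (simp add: Pforms_def)
  fix cs ys assume h: "homlist G0 G1 cs ys"
  have "(\<Sum>i\<in>hbasis_index. coord i Z * contr (fst i) (snd i) Q ys)
      = (\<Sum>i\<in>hbasis_index. psgn (p \<and> psum cs) * (coord i Z * Q (snd i # ys)))"
  proof (rule sum.cong[OF refl])
    fix i assume "i \<in> hbasis_index"
    show "coord i Z * contr (fst i) (snd i) Q ys = psgn (p \<and> psum cs) * (coord i Z * Q (snd i # ys))"
    proof (cases "fst i = p")
      case True then show ?thesis using contr_homlist[OF mQ h] by simp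
    next
      case False then show ?thesis using coord_other_gpart[OF Z] by simp
    qed
  qed
  also have "\<dots> = psgn (p \<and> psum cs) * (\<Sum>i\<in>hbasis_index. coord i Z * Q ((Z # ys)[0 := snd i]))"
    by (simp add: sum_distrib_left)
  also have "(\<Sum>i\<in>hbasis_index. coord i Z * Q ((Z # ys)[0 := snd i])) = Q ((Z # ys)[0 := (\<Sum>i\<in>hbasis_index. scale (coord i Z) (snd i))])"
    by (rule multilin_update_sum[OF mQ, symmetric]) simp
  also have "\<dots> = Q (Z # ys)" by (simp add: sum_coord_scale)
  finally show "(\<Sum>i\<in>hbasis_index. coord i Z * contr (fst i) (snd i) Q ys) = contr p Z Q ys"
    using contr_homlist[OF mQ h] by simp
qed

definition hprod :: "((nat \<Rightarrow> nat) \<Rightarrow> complex) \<Rightarrow> ('g list \<Rightarrow> complex) \<Rightarrow> ('g list \<Rightarrow> complex) \<Rightarrow> bool list \<Rightarrow> 'g list \<Rightarrow> complex" where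
  "hprod w F G bs xs = (\<Sum>a\<le>length xs.
      (1 / of_nat (fact a * fact (length xs - a))) *
      (\<Sum>\<sigma> \<in> {\<sigma>. \<sigma> permutes {..<length xs}}.
         w \<sigma> * eps \<sigma> bs * boxh a F G (permute_list \<sigma> bs) (permute_list \<sigma> xs)))"

lemma sprod_eq_hext: "sprod G0 G1 F G = hext G0 G1 (hprod (\<lambda>_. 1) F G)"
  unfolding sprod_def by (rule arg_cong[where f="hext G0 G1"]) (simp add: hprod_def fun_eq_iff)

lemma wprod_eq_hext: "wprod G0 G1 F G = hext G0 G1 (hprod (\<lambda>\<sigma>. of_int (sign \<sigma>)) F G)"
  unfolding wprod_def by (rule arg_cong[where f="hext G0 G1"]) (simp add: hprod_def fun_eq_iff)

lemma boxh_zero_entry: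
  assumes mF: "multilin scale F" and mG: "multilin scale G"
    and m: "m < length zs" "zs ! m = 0"
  shows "boxh a F G cs zs = 0"
proof (cases "m < a")
  case True
  have "F (take a zs) = 0" using multilin_zero_entry[OF mF, of m "take a zs"] True m by simp
  then show ?thesis by (simp add: boxh_def)
next
  case False
  have "G (drop a zs) = 0" using multilin_zero_entry[OF mG, of "m - a" "drop a zs"] False m by simp
  then show ?thesis by (simp add: boxh_def)
qed

lemma hprod_zero_entry:
  assumes mF: "multilin scale F" and mG: "multilin scale G"
    and l: "length cs = length ys" and i: "i < length ys" "ys ! i = 0"
  shows "hprod w F G cs ys = 0"
  unfolding hprod_def
proof (intro sum.neutral ballI)
  fix a assume "a \<in> {..length ys}"
  have "(\<Sum>\<sigma> \<in> {\<sigma>. \<sigma> permutes {..<length ys}}.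
         w \<sigma> * eps \<sigma> cs * boxh a F G (permute_list \<sigma> cs) (permute_list \<sigma> ys)) = 0"
  proof (intro sum.neutral ballI)
    fix \<sigma> assume "\<sigma> \<in> {\<sigma>. \<sigma> permutes {..<length ys}}"
    then have s: "\<sigma> permutes {..<length ys}" by simp
    have m: "inv \<sigma> i < length ys" by (rule inv_permutes_less[OF s i(1)])
    have "permute_list \<sigma> ys ! inv \<sigma> i = 0"
      using permute_list_nth[OF s m] i permutes_inverses(1)[OF s] by simp
    then have "boxh a F G (permute_list \<sigma> cs) (permute_list \<sigma> ys) = 0"
      using boxh_zero_entry[OF mF mG, of "inv \<sigma> i" "permute_list \<sigma> ys"] m by simp
    then show "w \<sigma> * eps \<sigma> cs * boxh a F G (permute_list \<sigma> cs) (permute_list \<sigma> ys) = 0" by simp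
  qed
  then show "1 / of_nat (fact a * fact (length ys - a)) * (\<Sum>\<sigma> \<in> {\<sigma>. \<sigma> permutes {..<length ys}}.
         w \<sigma> * eps \<sigma> cs * boxh a F G (permute_list \<sigma> cs) (permute_list \<sigma> ys)) = 0" by simp
qed

lemma hext_hprod:
  assumes mF: "multilin scale F" and mG: "multilin scale G" and h: "homlist G0 G1 bs xs"
  shows "hext G0 G1 (hprod w F G) xs = hprod w F G bs xs"
  by (rule hext_homlist[OF h]) (rule hprod_zero_entry[OF mF mG], auto)

lemma boxh_update:
  assumes mF: "multilin scale F" and mG: "multilin scale G" and m: "m < length zs"
  shows "boxh a F G cs (zs[m := scale c x + y]) = c * boxh a F G cs (zs[m := x]) + boxh a F G cs (zs[m := y])"
proof (cases "m < a")
  case True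
  have "F (take a (zs[m := scale c x + y])) = c * F (take a (zs[m := x])) + F (take a (zs[m := y]))"
    using multilin_update[OF mF, of m "take a zs" c x y] True m by (simp add: take_update_swap)
  moreover have "drop a (zs[m := v]) = drop a zs" for v using True by simp
  ultimately show ?thesis by (simp add: boxh_def algebra_simps)
next
  case False
  have "G (drop a (zs[m := scale c x + y])) = c * G (drop a (zs[m := x])) + G (drop a (zs[m := y]))"
    using multilin_update[OF mG, of "m - a" "drop a zs" c x y] False m by (simp add: drop_update_swap)
  moreover have "take a (zs[m := v]) = take a zs" for v using False by simp
  ultimately show ?thesis by (simp add: boxh_def algebra_simps)
qed

lemma hprod_update:
  assumes mF: "multilin scale F" and mG: "multilin scale G"
    and j: "j < length ys"
  shows "hprod w F G cs (ys[j := scale c x + y]) = c * hprod w F G cs (ys[j := x]) + hprod w F G cs (ys[j := y])"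
proof -
  have t: "w \<sigma> * eps \<sigma> cs * boxh a F G (permute_list \<sigma> cs) (permute_list \<sigma> (ys[j := scale c x + y]))
     = c * (w \<sigma> * eps \<sigma> cs * boxh a F G (permute_list \<sigma> cs) (permute_list \<sigma> (ys[j := x])))
       + w \<sigma> * eps \<sigma> cs * boxh a F G (permute_list \<sigma> cs) (permute_list \<sigma> (ys[j := y]))"
    if s: "\<sigma> permutes {..<length ys}" for \<sigma> a
  proof -
    have m: "inv \<sigma> j < length (permute_list \<sigma> ys)" using inv_permutes_less[OF s j] by simp
    have e: "permute_list \<sigma> (ys[j := v]) = (permute_list \<sigma> ys)[inv \<sigma> j := v]" for v
      by (rule permute_list_update[OF s j])
    show ?thesis unfolding e using boxh_update[OF mF mG m, of a "permute_list \<sigma> cs" c x y] by (simp add: algebra_simps)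
  qed
  have inner: "(\<Sum>\<sigma> \<in> {\<sigma>. \<sigma> permutes {..<length ys}}. w \<sigma> * eps \<sigma> cs * boxh a F G (permute_list \<sigma> cs) (permute_list \<sigma> (ys[j := scale c x + y])))
     = c * (\<Sum>\<sigma> \<in> {\<sigma>. \<sigma> permutes {..<length ys}}. w \<sigma> * eps \<sigma> cs * boxh a F G (permute_list \<sigma> cs) (permute_list \<sigma> (ys[j := x])))
       + (\<Sum>\<sigma> \<in> {\<sigma>. \<sigma> permutes {..<length ys}}. w \<sigma> * eps \<sigma> cs * boxh a F G (permute_list \<sigma> cs) (permute_list \<sigma> (ys[j := y])))" for a
  proof -
    have "(\<Sum>\<sigma> \<in> {\<sigma>. \<sigma> permutes {..<length ys}}. w \<sigma> * eps \<sigma> cs * boxh a F G (permute_list \<sigma> cs) (permute_list \<sigma> (ys[j := scale c x + y])))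
      = (\<Sum>\<sigma> \<in> {\<sigma>. \<sigma> permutes {..<length ys}}. c * (w \<sigma> * eps \<sigma> cs * boxh a F G (permute_list \<sigma> cs) (permute_list \<sigma> (ys[j := x])))
       + w \<sigma> * eps \<sigma> cs * boxh a F G (permute_list \<sigma> cs) (permute_list \<sigma> (ys[j := y])))"
      by (rule sum.cong[OF refl], rule t) simp
    then show ?thesis by (simp add: sum.distrib sum_distrib_left)
  qed
  show ?thesis
    unfolding hprod_def length_list_update inner
    by (simp add: sum.distrib sum_distrib_left algebra_simps)
qed

lemma multilin_hext_hprod: "multilin scale F \<Longrightarrow> multilin scale G \<Longrightarrow> multilin scale (hext G0 G1 (hprod w F G))"
  by (rule hext_multilin) (rule hprod_update)

lemma hprod_order:
  assumes N1: "\<forall>xs. N1 < length xs \<longrightarrow> F xs = 0" and N2: "\<forall>xs. N2 < length xs \<longrightarrow> G xs = 0"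
    and l: "N1 + N2 < length ys"
  shows "hprod w F G cs ys = 0"
  unfolding hprod_def
proof (intro sum.neutral ballI)
  fix a assume a: "a \<in> {..length ys}"
  have "boxh a F G cs' zs = 0" if "length zs = length ys" for cs' zs
  proof (cases "N1 < a")
    case True then show ?thesis using N1 a that by (simp add: boxh_def)
  next
    case False then show ?thesis using N2 a that l by (simp add: boxh_def)
  qed
  then show "1 / of_nat (fact a * fact (length ys - a)) * (\<Sum>\<sigma> \<in> {\<sigma>. \<sigma> permutes {..<length ys}}.
         w \<sigma> * eps \<sigma> cs * boxh a F G (permute_list \<sigma> cs) (permute_list \<sigma> ys)) = 0" by simp
qed

lemma Pforms_sprod:
  assumes F: "F \<in> Pforms scale G0 G1" and G: "G \<in> Pforms scale G0 G1"
  shows "sprod G0 G1 F G \<in> Pforms scale G0 G1"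
proof -
  have mF: "multilin scale F" and mG: "multilin scale G" using F G by (auto simp: Pforms_def)
  obtain N1 where N1: "\<forall>xs. N1 < length xs \<longrightarrow> F xs = 0" using F by (auto simp: Pforms_def fin_order_def)
  obtain N2 where N2: "\<forall>xs. N2 < length xs \<longrightarrow> G xs = 0" using G by (auto simp: Pforms_def fin_order_def)
  have "multilin scale (sprod G0 G1 F G)" unfolding sprod_eq_hext by (rule multilin_hext_hprod[OF mF mG])
  moreover have "fin_order (sprod G0 G1 F G)"
    unfolding fin_order_def sprod_eq_hext hext_def
    using hprod_order[OF N1 N2] by (intro exI[of _ "N1 + N2"]) auto
  moreover have "supersym G0 G1 (sprod G0 G1 F G)"
    unfolding supersym_def
  proof (intro allI impI)
    fix bs xs \<tau> assume h: "homlist G0 G1 bs xs" and t: "\<tau> permutes {..<length xs}"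
    have lb: "length bs = length xs" using h by (simp add: homlist_def)
    have inner: "eps \<tau> bs * (\<Sum>\<sigma> \<in> {\<sigma>. \<sigma> permutes {..<length xs}}. 1 * eps \<sigma> (permute_list \<tau> bs) *
              boxh a F G (permute_list \<sigma> (permute_list \<tau> bs)) (permute_list \<sigma> (permute_list \<tau> xs)))
          = (\<Sum>\<sigma> \<in> {\<sigma>. \<sigma> permutes {..<length xs}}. 1 * eps \<sigma> bs *
              boxh a F G (permute_list \<sigma> bs) (permute_list \<sigma> xs))" for a
      using sum_permutes_eps_compose_left[of \<tau> bs xs "boxh a F G", OF _ lb[symmetric]] t
      unfolding lb mult_1_left by blast
    have "eps \<tau> bs * hprod (\<lambda>_. 1) F G (permute_list \<tau> bs) (permute_list \<tau> xs)
        = (\<Sum>a\<le>length xs. 1 / of_nat (fact a * fact (length xs - a)) *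
            (eps \<tau> bs * (\<Sum>\<sigma> \<in> {\<sigma>. \<sigma> permutes {..<length xs}}. 1 * eps \<sigma> (permute_list \<tau> bs) *
              boxh a F G (permute_list \<sigma> (permute_list \<tau> bs)) (permute_list \<sigma> (permute_list \<tau> xs)))))"
      unfolding hprod_def length_permute_list by (subst sum_distrib_left) (simp only: mult_ac)
    also have "\<dots> = hprod (\<lambda>_. 1) F G bs xs"
      unfolding hprod_def inner ..
    finally have "eps \<tau> bs * hprod (\<lambda>_. 1) F G (permute_list \<tau> bs) (permute_list \<tau> xs) = hprod (\<lambda>_. 1) F G bs xs" .
    then show "eps \<tau> bs * sprod G0 G1 F G (permute_list \<tau> xs) = sprod G0 G1 F G xs"
      unfolding sprod_eq_hext hext_hprod[OF mF mG h] hext_hprod[OF mF mG homlist_permute[OF h t]] .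
  qed
  ultimately show ?thesis by (simp add: Pforms_def)
qed

lemma hprod_order_left:
  assumes "\<And>zs. length zs \<noteq> m \<Longrightarrow> F zs = 0"
  shows "hprod w F G bs xs = (if m \<le> length xs then 1 / of_nat (fact m * fact (length xs - m)) *
      (\<Sum>\<sigma> \<in> {\<sigma>. \<sigma> permutes {..<length xs}}. w \<sigma> * eps \<sigma> bs * boxh m F G (permute_list \<sigma> bs) (permute_list \<sigma> xs)) else 0)"
proof -
  have z: "boxh a F G cs zs = 0" if "a \<le> length zs" "a \<noteq> m" for a cs zs
    using assms[of "take a zs"] that by (simp add: boxh_def)
  show ?thesis
  proof (cases "m \<le> length xs")
    case True
    show ?thesis unfolding hprod_def using True
      by (subst sum_single_nat[of m]) (auto simp: z)
  next
    case False
    have zz: "boxh a F G (permute_list \<sigma> bs) (permute_list \<sigma> xs) = 0" if "a \<le> length xs" for a \<sigma>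
      using z[of a "permute_list \<sigma> xs"] that False by simp
    show ?thesis unfolding hprod_def using False by (simp add: zz)
  qed
qed

section \<open>Euler's identity\<close>

lemma sum_boxh_coord_form:
  assumes Q: "Q \<in> Pforms scale G0 G1" and h: "homlist G0 G1 cs ys" and l: "ys \<noteq> []"
  shows "(\<Sum>i\<in>hbasis_index. boxh 1 (coord_form i) (contr (fst i) (snd i) Q) cs ys) = Q ys"
proof -
  have mQ: "multilin scale Q" using Q by (simp add: Pforms_def)
  obtain y0 ys' where ys: "ys = y0 # ys'" using l by (cases ys) auto
  have lc: "length cs = length ys" using h by (simp add: homlist_def)
  then obtain c0 cs' where cs: "cs = c0 # cs'" using ys by (cases cs) auto
  have y0: "y0 \<in> gpart c0" and h': "homlist G0 G1 cs' ys'" using h ys cs by auto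
  have "(\<Sum>i\<in>hbasis_index. boxh 1 (coord_form i) (contr (fst i) (snd i) Q) cs ys)
      = (\<Sum>i\<in>hbasis_index. coord i y0 * Q ((y0 # ys')[0 := snd i]))"
  proof (rule sum.cong[OF refl])
    fix i assume "i \<in> hbasis_index"
    show "boxh 1 (coord_form i) (contr (fst i) (snd i) Q) cs ys = coord i y0 * Q ((y0 # ys')[0 := snd i])"
    proof (cases "fst i = c0")
      case True
      then show ?thesis
        using contr_homlist[OF mQ h', of "fst i" "snd i"]
        by (simp add: boxh_def ys cs coord_form_def conj_commute)
    next
      case False
      then show ?thesis using coord_other_gpart[OF y0 False] by (simp add: boxh_def ys cs coord_form_def)
    qed
  qed
  also have "\<dots> = Q ((y0 # ys')[0 := (\<Sum>i\<in>hbasis_index. scale (coord i y0) (snd i))])"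
    by (rule multilin_update_sum[OF mQ, symmetric]) simp
  also have "\<dots> = Q ys" by (simp add: sum_coord_scale ys)
  finally show ?thesis .
qed

lemma sum_sprod_coord_form_contr:
  assumes Q: "Q \<in> Pforms scale G0 G1" and h: "homlist G0 G1 bs xs"
  shows "(\<Sum>i\<in>hbasis_index. sprod G0 G1 (coord_form i) (contr (fst i) (snd i) Q) xs) = of_nat (length xs) * Q xs"
proof -
  let ?n = "length xs" and ?S = "{\<sigma>. \<sigma> permutes {..<length xs}}"
  have mphi: "multilin scale (coord_form i)" for i
    using coord_form_gdual by (simp add: gdual_def)
  have mcontr: "multilin scale (contr (fst i) (snd i) Q)" if "i \<in> hbasis_index" for i
    using Pforms_contr[OF Q hbasis_index_gpart[OF that]] by (simp add: Pforms_def)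
  have sprod_hom: "sprod G0 G1 (coord_form i) (contr (fst i) (snd i) Q) xs
      = (if 1 \<le> ?n then 1 / of_nat (fact (?n - 1)) *
          (\<Sum>\<sigma>\<in>?S. eps \<sigma> bs * boxh 1 (coord_form i) (contr (fst i) (snd i) Q) (permute_list \<sigma> bs) (permute_list \<sigma> xs))
         else 0)" if "i \<in> hbasis_index" for i
    unfolding sprod_eq_hext hext_hprod[OF mphi mcontr[OF that] h]
    using hprod_order_left[of 1 "coord_form i" "\<lambda>_. 1" "contr (fst i) (snd i) Q" bs xs]
    by (simp add: coord_form_def)
  show ?thesis
  proof (cases "xs = []")
    case True
    then show ?thesis using sprod_hom by simp
  next
    case False
    have "(\<Sum>i\<in>hbasis_index. sprod G0 G1 (coord_form i) (contr (fst i) (snd i) Q) xs)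
        = 1 / of_nat (fact (?n - 1)) * (\<Sum>\<sigma>\<in>?S. eps \<sigma> bs *
            (\<Sum>i\<in>hbasis_index. boxh 1 (coord_form i) (contr (fst i) (snd i) Q) (permute_list \<sigma> bs) (permute_list \<sigma> xs)))"
      using False by (simp add: sprod_hom Suc_leI sum_distrib_left sum.swap[of _ hbasis_index] mult.assoc)
    also have "\<dots> = 1 / of_nat (fact (?n - 1)) * (\<Sum>\<sigma>\<in>?S. Q xs)"
    proof -
      have "eps \<sigma> bs * (\<Sum>i\<in>hbasis_index. boxh 1 (coord_form i) (contr (fst i) (snd i) Q)
              (permute_list \<sigma> bs) (permute_list \<sigma> xs)) = Q xs" if s: "\<sigma> permutes {..<?n}" for \<sigma>
      proof -
        have "permute_list \<sigma> xs \<noteq> []" using False by (metis length_0_conv length_permute_list)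
        moreover have "eps \<sigma> bs * Q (permute_list \<sigma> xs) = Q xs"
          using Q h s by (simp add: Pforms_def supersym_def)
        ultimately show ?thesis using sum_boxh_coord_form[OF Q homlist_permute[OF h s]] by simp
      qed
      then show ?thesis by simp
    qed
    also have "\<dots> = of_nat ?n * Q xs"
      using False by (simp add: card_permutes_lessThan fact_reduce[of ?n] field_simps)
    finally show ?thesis .
  qed
qed

lemma euler_identity:
  assumes Q: "Q \<in> Pforms scale G0 G1" and ord: "\<And>xs. length xs \<noteq> k \<Longrightarrow> Q xs = 0" and k: "1 \<le> k"
  shows "Q = (\<lambda>xs. \<Sum>i\<in>hbasis_index. (1 / of_nat k) * sprod G0 G1 (coord_form i) (contr (fst i) (snd i) Q) xs)"
proof (rule multilin_eqI_homlist)
  show "multilin scale Q" using Q by (simp add: Pforms_def)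
  have "(\<lambda>xs. \<Sum>i\<in>hbasis_index. (1 / of_nat k) * sprod G0 G1 (coord_form i) (contr (fst i) (snd i) Q) xs)
      \<in> Pforms scale G0 G1"
    using Pforms_sprod[OF gdual_Pforms[OF coord_form_gdual] Pforms_contr[OF Q]] hbasis_index_gpart
    by (intro Pforms_sum) blast
  then show "multilin scale (\<lambda>xs. \<Sum>i\<in>hbasis_index. (1 / of_nat k) * sprod G0 G1 (coord_form i) (contr (fst i) (snd i) Q) xs)"
    by (simp add: Pforms_def)
  fix bs xs assume h: "homlist G0 G1 bs xs"
  have "(\<Sum>i\<in>hbasis_index. (1 / of_nat k) * sprod G0 G1 (coord_form i) (contr (fst i) (snd i) Q) xs)
      = of_nat (length xs) / of_nat k * Q xs"
    unfolding sum_distrib_left[symmetric] sum_sprod_coord_form_contr[OF Q h] by simp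
  also have "\<dots> = Q xs"
    using ord[of xs] k by (cases "length xs = k") auto
  finally show "Q xs = (\<Sum>i\<in>hbasis_index. (1 / of_nat k) * sprod G0 G1 (coord_form i) (contr (fst i) (snd i) Q) xs)" ..
qed

section \<open>An explicit formula for s\<close>

lemma dform_sum_gdual:
  assumes g: "\<phi> \<in> gdual scale" and l: "length cs = length ys"
  shows "(\<Sum>(i, j) \<in> {(i, j). i < j \<and> j < length ys}.
        (-1) ^ (i + j) * psgn (cs ! i \<and> psum (take i cs)) *
        psgn (cs ! j \<and> (psum (take j cs) \<noteq> cs ! i)) *
        \<phi> (br (ys ! i) (ys ! j) # [ys ! l. l \<leftarrow> [0..<length ys], l \<noteq> i, l \<noteq> j]))
     = (if length ys = 2 then - \<phi> [br (ys ! 0) (ys ! 1)] else 0)"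
proof (cases "length ys = 2")
  case True
  have "{(i, j). i < j \<and> j < length ys} = {(0::nat, 1::nat)}" using True by auto
  moreover obtain c0 c1 where "cs = [c0, c1]" using l True
    by (metis (no_types, lifting) One_nat_def Suc_1 length_0_conv length_Suc_conv)
  moreover have "[0..<2] = [0::nat, 1]" by (simp add: upt_rec)
  ultimately show ?thesis using True by simp
next
  case False
  have z: "\<phi> zs = 0" if "length zs \<noteq> 1" for zs using g that by (simp add: gdual_def)
  have "\<phi> (br (ys ! i) (ys ! j) # [ys ! l. l \<leftarrow> [0..<length ys], l \<noteq> i, l \<noteq> j]) = 0"
    if ij: "i < j" "j < length ys" for i j
  proof -
    have n3: "3 \<le> length ys" using ij False by linarith
    define l where "l = (if i = 0 then (if j = 1 then 2 else 1) else (0::nat))"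
    have l: "l < length ys" "l \<noteq> i" "l \<noteq> j" using ij n3 by (auto simp: l_def)
    have "ys ! l \<in> set [ys ! l. l \<leftarrow> [0..<length ys], l \<noteq> i, l \<noteq> j]"
      using l by auto
    then have "[ys ! l. l \<leftarrow> [0..<length ys], l \<noteq> i, l \<noteq> j] \<noteq> []" by auto
    then show ?thesis by (intro z) simp
  qed
  then show ?thesis using False by (auto intro!: sum.neutral)
qed

lemma dform_gdual_eq:
  assumes g: "\<phi> \<in> gdual scale"
  shows "dform G0 G1 br \<phi> ys = hext G0 G1 (\<lambda>cs ys. if length ys = 2 then - \<phi> [br (ys ! 0) (ys ! 1)] else 0) ys"
  unfolding dform_def by (rule hext_cong) (rule dform_sum_gdual[OF g])

lemma dform_gdual_homlist:
  assumes g: "\<phi> \<in> gdual scale" and h: "homlist G0 G1 cs ys"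
  shows "dform G0 G1 br \<phi> ys = (if length ys = 2 then - \<phi> [br (ys ! 0) (ys ! 1)] else 0)"
  unfolding dform_gdual_eq[OF g]
proof (rule hext_homlist[OF h])
  have m: "multilin scale \<phi>" using g by (simp add: gdual_def)
  fix cs' :: "bool list" and ys' :: "'g list" and i
  assume a: "length cs' = length ys'" "length ys' = length ys" "i < length ys'" "ys' ! i = 0"
  show "(if length ys' = 2 then - \<phi> [br (ys' ! 0) (ys' ! 1)] else 0) = 0"
  proof (cases "length ys' = 2")
    case True
    then have "br (ys' ! 0) (ys' ! 1) = 0" using a by (cases i) auto
    then show ?thesis using multilin_zero_entry[OF m, of 0 "[0]"] True by simp
  qed simp
qed

lemma dform_gdual_order:
  assumes "\<phi> \<in> gdual scale" "length ys \<noteq> 2"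
  shows "dform G0 G1 br \<phi> ys = 0"
  unfolding dform_gdual_eq[OF assms(1)] hext_def using assms(2) by simp

end

lemma take_2_eq: "2 \<le> length xs \<Longrightarrow> take 2 xs = [xs ! 0, xs ! 1]"
proof -
  assume "2 \<le> length xs"
  then obtain a b r where "xs = a # b # r"
    by (metis One_nat_def Suc_1 Suc_le_length_iff)
  then show ?thesis by (simp add: numeral_2_eq_2)
qed

fun bracket_pairs :: "('g \<Rightarrow> 'g \<Rightarrow> 'g) \<Rightarrow> 'g list \<Rightarrow> 'g list" where
  "bracket_pairs f (a # b # r) = f a b # bracket_pairs f r"
| "bracket_pairs f _ = []"

fun parity_pairs :: "bool list \<Rightarrow> bool list" where
  "parity_pairs (a # b # r) = (a \<noteq> b) # parity_pairs r"
| "parity_pairs _ = []"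

lemma psum_parity_pairs: "even (length cs) \<Longrightarrow> psum (parity_pairs cs) = psum cs"
  by (induction cs rule: parity_pairs.induct) auto

lemma bracket_pairs_append: "even (length xs) \<Longrightarrow> bracket_pairs f (xs @ ys) = bracket_pairs f xs @ bracket_pairs f ys"
  by (induction f xs rule: bracket_pairs.induct) auto

lemma length_bracket_pairs: "length (bracket_pairs f xs) = length xs div 2"
  by (induction f xs rule: bracket_pairs.induct) auto

lemma length_parity_pairs: "length (parity_pairs xs) = length xs div 2"
  by (induction xs rule: parity_pairs.induct) auto

definition s_coeff :: "nat \<Rightarrow> complex" where "s_coeff k = (-1) ^ k / (2 ^ k * fact k)"

context lie_superalg
begin

lemma homlist_bracket_pairs:
  "homlist G0 G1 cs ys \<Longrightarrow> homlist G0 G1 (parity_pairs cs) (bracket_pairs br ys)"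
proof (induction ys arbitrary: cs rule: induct_list012)
  case (3 a b r)
  then obtain c0 c1 cs' where "cs = c0 # c1 # cs'"
    by (metis homlist_length length_Suc_conv)
  then show ?case using 3 bracket_gpart by auto
qed (auto simp: homlist_def length_Suc_conv)

lemma super_alt_contr_bracket_pairs:
  assumes mQ: "multilin scale Q" and h: "homlist G0 G1 ds ws" and l: "length ws = 2 * k"
  shows "super_alt (2 * k) (\<lambda>cs ys. contr p (br u v) Q (bracket_pairs br ys)) ds ws
    = psgn (p \<and> psum ds) * super_alt (2 * k) (\<lambda>cs ys. Q (bracket_pairs br (u # v # ys))) ds ws"
proof -
  have "super_alt (2 * k) (\<lambda>cs ys. contr p (br u v) Q (bracket_pairs br ys)) ds ws
      = super_alt (2 * k) (\<lambda>cs ys. psgn (p \<and> psum ds) * Q (bracket_pairs br (u # v # ys))) ds ws"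
  proof (rule super_alt_cong_permutes)
    fix \<tau> assume t: "\<tau> permutes {..<2 * k}"
    then have t': "\<tau> permutes {..<length ws}" using l by simp
    have "homlist G0 G1 (parity_pairs (permute_list \<tau> ds)) (bracket_pairs br (permute_list \<tau> ws))"
      by (rule homlist_bracket_pairs[OF homlist_permute[OF h t']])
    moreover have "psum (parity_pairs (permute_list \<tau> ds)) = psum ds"
      using psum_parity_pairs[of "permute_list \<tau> ds"] psum_permute[of \<tau> ds] t' l h
      by (simp add: homlist_def)
    ultimately show "contr p (br u v) Q (bracket_pairs br (permute_list \<tau> ws))
        = psgn (p \<and> psum ds) * Q (bracket_pairs br (u # v # permute_list \<tau> ws))"
      using contr_homlist[OF mQ] by simp
  qed
  then show ?thesis by (simp add: super_alt_scale)
qed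

end

context lie_superalg_s_map
begin

lemma s_coord_form: "s (coord_form i) = dform G0 G1 br (coord_form i)"
  by (rule s_gdual[OF coord_form_gdual])

lemma multilin_dform_coord_form: "multilin scale (dform G0 G1 br (coord_form i))"
  using multilin_s[OF gdual_Pforms[OF coord_form_gdual]] s_coord_form by simp

lemma wprod_dform_coord_form:
  assumes m: "multilin scale \<omega>" and h: "homlist G0 G1 bs xs"
  shows "wprod G0 G1 (dform G0 G1 br (coord_form i)) \<omega> xs = (if 2 \<le> length xs then
      1 / of_nat (fact 2 * fact (length xs - 2)) * super_alt (length xs) (boxh 2 (dform G0 G1 br (coord_form i)) \<omega>) bs xs
    else 0)"
proof -
  have z: "\<And>zs. length zs \<noteq> 2 \<Longrightarrow> dform G0 G1 br (coord_form i) zs = 0"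
    by (rule dform_gdual_order[OF coord_form_gdual])
  show ?thesis
    unfolding wprod_eq_hext hext_hprod[OF multilin_dform_coord_form m h]
    using hprod_order_left[of 2 "dform G0 G1 br (coord_form i)" "\<lambda>\<sigma>. of_int (sign \<sigma>)" \<omega> bs xs] z
    by (simp add: super_alt_def)
qed

lemma sum_boxh_dform_coord_form:
  assumes Q: "Q \<in> Pforms scale G0 G1" and h: "homlist G0 G1 cs ys" and l: "2 \<le> length ys"
  shows "(\<Sum>i\<in>hbasis_index. boxh 2 (dform G0 G1 br (coord_form i)) (s (contr (fst i) (snd i) Q)) cs ys)
    = - psgn (psum (drop 2 cs) \<and> psum (take 2 cs)) * s (contr (psum (take 2 cs)) (br (ys ! 0) (ys ! 1)) Q) (drop 2 ys)"
proof -
  let ?Z = "br (ys ! 0) (ys ! 1)" and ?p = "psum (take 2 cs)"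
  have lc: "length cs = length ys" using h by (simp add: homlist_def)
  have Z: "?Z \<in> gpart ?p"
  proof -
    have l0: "0 < length ys" and l1: "1 < length ys" using l by auto
    have "ys ! 0 \<in> gpart (cs ! 0)" "ys ! 1 \<in> gpart (cs ! 1)"
      by (rule homlist_nth[OF h l0], rule homlist_nth[OF h l1])
    then have "?Z \<in> gpart (cs ! 0 \<noteq> cs ! 1)" by (rule bracket_gpart)
    moreover have "take 2 cs = [cs ! 0, cs ! 1]" using l lc by (intro take_2_eq) simp
    ultimately show ?thesis by simp
  qed
  have PI: "\<And>i. i \<in> hbasis_index \<Longrightarrow> contr (fst i) (snd i) Q \<in> Pforms scale G0 G1"
    using Pforms_contr[OF Q] hbasis_index_gpart by blast
  have ht: "homlist G0 G1 (take 2 cs) (take 2 ys)" using homlist_take[OF h] .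
  have dv: "dform G0 G1 br (coord_form i) (take 2 ys) = - coord i ?Z" for i
    using dform_gdual_homlist[OF coord_form_gdual ht, of i] l by (simp add: coord_form_def)
  have "(\<Sum>i\<in>hbasis_index. boxh 2 (dform G0 G1 br (coord_form i)) (s (contr (fst i) (snd i) Q)) cs ys)
      = - psgn (psum (drop 2 cs) \<and> ?p) * (\<Sum>i\<in>hbasis_index. coord i ?Z * s (contr (fst i) (snd i) Q) (drop 2 ys))"
    by (simp add: boxh_def dv sum_distrib_left algebra_simps sum_negf)
  also have "(\<Sum>i\<in>hbasis_index. coord i ?Z * s (contr (fst i) (snd i) Q) (drop 2 ys))
      = s (\<lambda>xs. \<Sum>i\<in>hbasis_index. coord i ?Z * contr (fst i) (snd i) Q xs) (drop 2 ys)"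
    using s_sum[of hbasis_index "\<lambda>i. contr (fst i) (snd i) Q" "\<lambda>i. coord i ?Z"] PI by simp
  also have "(\<lambda>xs. \<Sum>i\<in>hbasis_index. coord i ?Z * contr (fst i) (snd i) Q xs) = contr ?p ?Z Q"
    by (rule sum_coord_contr[OF Q Z])
  finally show ?thesis by simp
qed

lemma s_recursion:
  assumes Q: "Q \<in> Pforms scale G0 G1" and ord: "\<And>xs. length xs \<noteq> Suc k \<Longrightarrow> Q xs = 0"
    and h: "homlist G0 G1 bs xs"
  shows "s Q xs = (if 2 \<le> length xs then - (1 / of_nat (Suc k)) * (1 / of_nat (fact 2 * fact (length xs - 2))) *
   super_alt (length xs) (\<lambda>cs ys. psgn (psum (drop 2 cs) \<and> psum (take 2 cs)) *
      s (contr (psum (take 2 cs)) (br (ys ! 0) (ys ! 1)) Q) (drop 2 ys)) bs xs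
    else 0)"
proof -
  let ?c = "1 / of_nat (fact 2 * fact (length xs - 2)) :: complex"
  have PI: "\<And>i. i \<in> hbasis_index \<Longrightarrow> contr (fst i) (snd i) Q \<in> Pforms scale G0 G1"
    using Pforms_contr[OF Q] hbasis_index_gpart by blast
  have PS: "\<And>i. i \<in> hbasis_index \<Longrightarrow> sprod G0 G1 (coord_form i) (contr (fst i) (snd i) Q) \<in> Pforms scale G0 G1"
    using Pforms_sprod[OF gdual_Pforms[OF coord_form_gdual] PI] by blast
  have E: "Q = (\<lambda>xs. \<Sum>i\<in>hbasis_index. (1 / of_nat (Suc k)) * sprod G0 G1 (coord_form i) (contr (fst i) (snd i) Q) xs)"
    using euler_identity[OF Q ord] by simp
  have "s Q = (\<lambda>xs. \<Sum>i\<in>hbasis_index. (1 / of_nat (Suc k)) * s (sprod G0 G1 (coord_form i) (contr (fst i) (snd i) Q)) xs)"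
    by (subst E, rule s_sum[OF PS])
  also have "\<dots> = (\<lambda>xs. \<Sum>i\<in>hbasis_index. (1 / of_nat (Suc k)) * wprod G0 G1 (dform G0 G1 br (coord_form i)) (s (contr (fst i) (snd i) Q)) xs)"
    using s_mult[OF gdual_Pforms[OF coord_form_gdual] PI] s_coord_form by (intro ext sum.cong refl) simp
  finally have sQ: "s Q xs = (1 / of_nat (Suc k)) * (\<Sum>i\<in>hbasis_index. wprod G0 G1 (dform G0 G1 br (coord_form i)) (s (contr (fst i) (snd i) Q)) xs)"
    by (simp add: sum_distrib_left)
  show ?thesis
  proof (cases "2 \<le> length xs")
    case False
    then show ?thesis unfolding sQ using wprod_dform_coord_form[OF multilin_s[OF PI] h] by simp
  next
    case True
    have "s Q xs = (1 / of_nat (Suc k)) * ?c *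
        super_alt (length xs) (\<lambda>cs ys. \<Sum>i\<in>hbasis_index. boxh 2 (dform G0 G1 br (coord_form i)) (s (contr (fst i) (snd i) Q)) cs ys) bs xs"
      unfolding sQ super_alt_sum using wprod_dform_coord_form[OF multilin_s[OF PI] h] True
      by (simp add: sum_distrib_left cong: sum.cong)
    also have "super_alt (length xs) (\<lambda>cs ys. \<Sum>i\<in>hbasis_index. boxh 2 (dform G0 G1 br (coord_form i)) (s (contr (fst i) (snd i) Q)) cs ys) bs xs
      = super_alt (length xs) (\<lambda>cs ys. - (psgn (psum (drop 2 cs) \<and> psum (take 2 cs)) *
          s (contr (psum (take 2 cs)) (br (ys ! 0) (ys ! 1)) Q) (drop 2 ys))) bs xs"
      using True by (intro super_alt_cong[OF h refl]) (simp add: sum_boxh_dform_coord_form[OF Q])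
    finally show ?thesis using True by (simp add: super_alt_minus)
  qed
qed

lemma permutes_lessThan_0: "{\<sigma>. \<sigma> permutes {..<(0::nat)}} = {id}"
  by auto

lemma s_coeff_Suc: "s_coeff (Suc k) = - s_coeff k / (2 * of_nat (Suc k))"
  unfolding s_coeff_def by (simp add: field_simps)

lemma s_order_0:
  assumes "\<And>xs. xs \<noteq> [] \<Longrightarrow> Q xs = 0"
  shows "s Q = constf (Q [])"
proof -
  have "Q = constf (Q [])"
    using assms by (auto simp: constf_def fun_eq_iff)
  then show ?thesis using s_const by metis
qed

context
  fixes Q :: "'g list \<Rightarrow> complex" and k :: nat
  assumes Q: "Q \<in> Pforms scale G0 G1" and ord: "\<And>xs. length xs \<noteq> Suc k \<Longrightarrow> Q xs = 0"
    and s_contr: "\<And>p Z ds ws. Z \<in> gpart p \<Longrightarrow> homlist G0 G1 ds ws \<Longrightarrow>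
      s (contr p Z Q) ws = (if length ws = 2 * k then
        s_coeff k * super_alt (2 * k) (\<lambda>cs ys. contr p Z Q (bracket_pairs br ys)) ds ws else 0)"
begin

lemma s_lead_term:
  assumes hc: "homlist G0 G1 cs ys" and n2: "2 \<le> length ys"
  shows "psgn (psum (drop 2 cs) \<and> psum (take 2 cs)) * s (contr (psum (take 2 cs)) (br (ys ! 0) (ys ! 1)) Q) (drop 2 ys)
    = (if length ys = 2 * Suc k then s_coeff k *
        super_alt (length ys - 2) (\<lambda>cs' ys'. Q (bracket_pairs br (take 2 ys @ ys'))) (drop 2 cs) (drop 2 ys)
      else 0)"
proof -
  obtain u v ws where ys: "ys = u # v # ws"
    using n2 by (metis One_nat_def Suc_1 Suc_le_length_iff)
  obtain c0 c1 ds where cs: "cs = c0 # c1 # ds"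
    using hc ys by (metis homlist_length length_Suc_conv)
  have hw: "homlist G0 G1 ds ws" and Z: "br u v \<in> gpart (c0 \<noteq> c1)"
    using hc bracket_gpart by (auto simp: ys cs)
  have "psgn (psum ds \<and> (c0 \<noteq> c1)) * super_alt (2 * k) (\<lambda>cs ys. contr (c0 \<noteq> c1) (br u v) Q (bracket_pairs br ys)) ds ws
      = super_alt (2 * k) (\<lambda>cs ys. Q (bracket_pairs br (u # v # ys))) ds ws" if "length ws = 2 * k"
    using super_alt_contr_bracket_pairs[OF _ hw that] Q by (simp add: Pforms_def conj_commute)
  then show ?thesis
    using s_contr[OF Z hw] by (simp add: ys cs numeral_eq_Suc)
qed

lemma s_explicit_Suc:
  assumes h: "homlist G0 G1 bs xs"
  shows "s Q xs = (if length xs = 2 * Suc k then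
    s_coeff (Suc k) * super_alt (2 * Suc k) (\<lambda>cs ys. Q (bracket_pairs br ys)) bs xs else 0)"
proof (cases "2 \<le> length xs")
  case False
  then show ?thesis using s_recursion[OF Q ord h] by simp
next
  case n2: True
  let ?n = "length xs" and ?H = "\<lambda>cs ys. Q (bracket_pairs br ys)"
  have lb: "length bs = ?n" using h by (simp add: homlist_def)
  have alt: "super_alt ?n (\<lambda>cs ys. psgn (psum (drop 2 cs) \<and> psum (take 2 cs)) *
        s (contr (psum (take 2 cs)) (br (ys ! 0) (ys ! 1)) Q) (drop 2 ys)) bs xs
    = super_alt ?n (\<lambda>cs ys. if ?n = 2 * Suc k then s_coeff k *
       super_alt (?n - 2) (\<lambda>cs' ys'. ?H (take 2 cs @ cs') (take 2 ys @ ys')) (drop 2 cs) (drop 2 ys)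
     else 0) bs xs"
  proof (rule super_alt_cong[OF h refl])
    fix cs ys assume "homlist G0 G1 cs ys" "length ys = ?n"
    then show "psgn (psum (drop 2 cs) \<and> psum (take 2 cs)) * s (contr (psum (take 2 cs)) (br (ys ! 0) (ys ! 1)) Q) (drop 2 ys)
      = (if ?n = 2 * Suc k then s_coeff k *
         super_alt (?n - 2) (\<lambda>cs' ys'. ?H (take 2 cs @ cs') (take 2 ys @ ys')) (drop 2 cs) (drop 2 ys)
       else 0)"
      using s_lead_term[of cs ys] n2 by simp
  qed
  show ?thesis
  proof (cases "?n = 2 * Suc k")
    case False
    then show ?thesis using s_recursion[OF Q ord h] n2 alt by (simp add: super_alt_zero)
  next
    case n: True
    have "s Q xs = - (1 / of_nat (Suc k)) * (1 / of_nat (fact 2 * fact (?n - 2))) * s_coeff k *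
        super_alt ?n (\<lambda>cs ys. super_alt (?n - 2) (\<lambda>cs' ys'. ?H (take 2 cs @ cs') (take 2 ys @ ys')) (drop 2 cs) (drop 2 ys)) bs xs"
      using s_recursion[OF Q ord h] n2 alt n by (simp add: super_alt_scale)
    also have "\<dots> = - (1 / of_nat (Suc k)) * (1 / of_nat (fact 2 * fact (?n - 2))) * s_coeff k *
        (of_nat (fact (?n - 2)) * super_alt ?n ?H bs xs)"
      unfolding super_alt_iterated[OF lb refl n2, of ?H] ..
    also have "\<dots> = s_coeff (Suc k) * super_alt ?n ?H bs xs"
      by (simp add: s_coeff_Suc)
    finally show ?thesis using n by simp
  qed
qed

end

lemma s_explicit:
  assumes "Q \<in> Pforms scale G0 G1" "\<And>xs. length xs \<noteq> k \<Longrightarrow> Q xs = 0" "homlist G0 G1 bs xs"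
  shows "s Q xs = (if length xs = 2 * k then s_coeff k * super_alt (2 * k) (\<lambda>cs ys. Q (bracket_pairs br ys)) bs xs else 0)"
  using assms
proof (induction k arbitrary: Q bs xs)
  case 0
  then have "bs = []" if "xs = []" using that by (simp add: homlist_def)
  then show ?case using s_order_0[of Q] 0(2)
    by (simp add: constf_def s_coeff_def super_alt_def permutes_lessThan_0)
next
  case (Suc k)
  note Q = Suc.prems(1) and ord = Suc.prems(2)
  show ?case
  proof (rule s_explicit_Suc[OF Q ord _ Suc.prems(3)])
    fix p Z ds ws assume Z: "Z \<in> gpart p" and hw: "homlist G0 G1 ds ws"
    show "s (contr p Z Q) ws = (if length ws = 2 * k then
        s_coeff k * super_alt (2 * k) (\<lambda>cs ys. contr p Z Q (bracket_pairs br ys)) ds ws else 0)"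
      by (rule Suc.IH[OF Pforms_contr[OF Q Z] contr_order[OF ord] hw])
  qed
qed

end

context lie_superalg
begin

section \<open>Invariance and the Jacobi identity\<close>

lemma lie_invariance_homlist:
  assumes L: "lieD G0 G1 br p X P = (\<lambda>_. 0)" and mP: "multilin scale P"
    and X: "X \<in> gpart p" and h: "homlist G0 G1 ds ws"
  shows "(\<Sum>j<length ws. psgn (p \<and> psum (take j ds)) * P (ws[j := br X (ws ! j)])) = 0"
proof -
  have "lieD G0 G1 br p X P ws = - psgn (p \<and> (p \<noteq> psum ds)) *
      (\<Sum>j<length ws. psgn (p \<and> psum (take j ds)) * P (ws[j := br X (ws ! j)]))"
    unfolding lieD_def
  proof (rule hext_homlist[OF h])
    fix cs' :: "bool list" and ys' :: "'g list" and i
    assume a: "length cs' = length ys'" "length ys' = length ws" "i < length ys'" "ys' ! i = 0"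
    have "P (ys'[j := br X (ys' ! j)]) = 0" for j
      using multilin_zero_entry[OF mP, of i "ys'[j := br X (ys' ! j)]"] a by (cases "j = i") simp_all
    then show "- psgn (p \<and> (p \<noteq> psum cs')) *
      (\<Sum>j<length ys'. psgn (p \<and> psum (take j cs')) * P (ys'[j := br X (ys' ! j)])) = 0" by simp
  qed
  then show ?thesis using L by (simp add: psgn_def split: if_splits)
qed

lemma super_jacobi_cyclic:
  assumes a: "x \<in> gpart A" and b: "y \<in> gpart B" and c: "z \<in> gpart C" and mP: "multilin scale P"
  shows "psgn ((A \<noteq> B) \<and> C) * P (br z (br x y) # R)
      + psgn ((C \<noteq> A) \<and> B) * (psgn (C \<and> (A \<noteq> B)) * P (br y (br z x) # R))
      + P (br x (br y z) # R) = 0"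
proof -
  have j: "br x (br y z) = br (br x y) z + scale (psgn (A \<and> B)) (br y (br x z))" by (rule bracket_jacobi[OF a b])
  have a1: "br (br x y) z = - scale (psgn ((A \<noteq> B) \<and> C)) (br z (br x y))"
    by (rule bracket_antisym[OF bracket_gpart[OF a b] c])
  have a2: "br x z = - scale (psgn (A \<and> C)) (br z x)" by (rule bracket_antisym[OF a c])
  have "br y (br x z) = - scale (psgn (A \<and> C)) (br y (br z x))"
    unfolding a2 bracket_minus_right bracket_scale_right ..
  then have "br x (br y z) = - scale (psgn ((A \<noteq> B) \<and> C)) (br z (br x y)) - scale (psgn (A \<and> B) * psgn (A \<and> C)) (br y (br z x))"
    using j a1 by (simp add: scale_minus_right)
  then have "scale (psgn ((A \<noteq> B) \<and> C)) (br z (br x y)) + scale (psgn ((C \<noteq> A) \<and> B)) (scale (psgn (C \<and> (A \<noteq> B))) (br y (br z x)))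
     + br x (br y z) = 0"
    by (cases A; cases B; cases C) (simp_all add: scale_minus_left)
  then have "P ((scale (psgn ((A \<noteq> B) \<and> C)) (br z (br x y)) + scale (psgn ((C \<noteq> A) \<and> B)) (scale (psgn (C \<and> (A \<noteq> B))) (br y (br z x)))
     + br x (br y z)) # R) = 0"
    using multilin_zero_entry[OF mP, of 0 "0 # R"] by simp
  then show ?thesis
    using multilin_update_add[OF mP, of 0 "0 # R"] multilin_update_scale[OF mP, of 0 "0 # R"] by (simp add: mult.assoc)
qed

definition jacobi_term :: "('g list \<Rightarrow> complex) \<Rightarrow> bool list \<Rightarrow> 'g list \<Rightarrow> complex" where
  "jacobi_term P cs ys = psgn ((cs ! 0 \<noteq> cs ! 1) \<and> cs ! 2) *
    P (br (ys ! 2) (br (ys ! 0) (ys ! 1)) # ys ! 3 # bracket_pairs br (drop 4 ys))"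

lemma jacobi_term_cyclic_sum:
  assumes mP: "multilin scale P" and h: "homlist G0 G1 cs ys" and l: "4 \<le> length ys"
  shows "jacobi_term P cs ys + perm_act (front_perm 2) (jacobi_term P) cs ys
    + perm_act (front_perm 2) (perm_act (front_perm 2) (jacobi_term P)) cs ys = 0"
proof -
  obtain y0 y1 y2 y3 r where ys: "ys = y0 # y1 # y2 # y3 # r"
    using l by (auto simp: numeral_eq_Suc Suc_le_length_iff)
  obtain c0 c1 c2 c3 cr where cs: "cs = c0 # c1 # c2 # c3 # cr" and lr: "length cr = length r"
    using h by (auto simp: ys homlist_def length_Suc_conv)
  have rot: "perm_act (front_perm 2) H (a # b # c # ds) (x # y # z # ws) = psgn (c \<and> (a \<noteq> b)) * H (c # a # b # ds) (z # x # y # ws)"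
    if "length ws = length ds" for H :: "bool list \<Rightarrow> 'g list \<Rightarrow> complex" and a b c ds x y z ws
    using perm_act_front_perm[of 2 "a # b # c # ds" "x # y # z # ws" H] that by (simp add: numeral_2_eq_2)
  have lr': "length (y3 # r) = length (c3 # cr)" using lr by simp
  have k: "psgn (c1 \<and> c2 = (\<not> c0)) * (psgn (c2 \<and> c0 = (\<not> c1)) * (psgn (c1 = (\<not> c2) \<and> c0) * X)) = X" for X
    by (cases c0; cases c1; cases c2) simp_all
  have "y0 \<in> gpart c0" "y1 \<in> gpart c1" "y2 \<in> gpart c2" using h ys cs by auto
  from super_jacobi_cyclic[OF this mP, of "y3 # bracket_pairs br r"] show ?thesis
    unfolding ys cs rot[OF lr'] by (simp add: jacobi_term_def numeral_eq_Suc algebra_simps k)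
qed

lemma super_alt_jacobi_term_eq_0:
  assumes mP: "multilin scale P" and h: "homlist G0 G1 bs xs" and l: "length xs = n" and n4: "4 \<le> n"
  shows "super_alt n (jacobi_term P) bs xs = 0"
proof -
  let ?\<rho> = "front_perm 2"
  have lb: "length bs = n" using h l by (simp add: homlist_def)
  have r: "?\<rho> permutes {..<n}" using n4 by (intro front_perm_permutes) simp
  have "3 * super_alt n (jacobi_term P) bs xs = super_alt n (jacobi_term P) bs xs
      + super_alt n (perm_act ?\<rho> (jacobi_term P)) bs xs + super_alt n (perm_act ?\<rho> (perm_act ?\<rho> (jacobi_term P))) bs xs"
    using super_alt_reindex[OF r lb l, of "jacobi_term P"] super_alt_reindex[OF r lb l, of "perm_act ?\<rho> (jacobi_term P)"]
    by simp
  also have "\<dots> = super_alt n (\<lambda>cs ys. 0) bs xs"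
    unfolding super_alt_add[symmetric]
    using jacobi_term_cyclic_sum[OF mP] n4 by (intro super_alt_cong[OF h l]) auto
  finally show ?thesis by (simp add: super_alt_zero)
qed

lemma parity_pairs_append: "even (length xs) \<Longrightarrow> parity_pairs (xs @ ys) = parity_pairs xs @ parity_pairs ys"
  by (induction xs rule: parity_pairs.induct) auto

text \<open>The \<open>j\<close>-th summand of \<open>(L\<^bsub>x\<^sub>0\<^esub> P)(x\<^sub>1, [x\<^sub>2,x\<^sub>3], [x\<^sub>4,x\<^sub>5], \<dots>)\<close>, up to an overall sign;
  its \<open>0\<close>-th summand is
  \<open>P([x\<^sub>0,x\<^sub>1], [x\<^sub>2,x\<^sub>3], \<dots>)\<close>.\<close>

definition lie_term :: "('g list \<Rightarrow> complex) \<Rightarrow> nat \<Rightarrow> bool list \<Rightarrow> 'g list \<Rightarrow> complex" where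
  "lie_term P j cs ys = psgn (cs ! 0 \<and> psum (take j (cs ! 1 # parity_pairs (drop 2 cs)))) *
     P ((ys ! 1 # bracket_pairs br (drop 2 ys))[j := br (ys ! 0) ((ys ! 1 # bracket_pairs br (drop 2 ys)) ! j)])"

lemma lie_term_split:
  assumes lA: "length CA = length A" and eA: "even (length A)"
  shows "lie_term P (Suc (length A div 2)) (c0 # c1 # CA @ ca # cb # CB) (y0 # y1 # A @ a # b # B)
    = psgn (c0 \<and> (c1 \<noteq> psum CA)) * P (y1 # bracket_pairs br A @ br y0 (br a b) # bracket_pairs br B)"
proof -
  have lpA: "length (bracket_pairs br A) = length A div 2" by (rule length_bracket_pairs)
  have lpCA: "length (parity_pairs CA) = length A div 2" using length_parity_pairs[of CA] lA by simp
  have pb: "bracket_pairs br (A @ a # b # B) = bracket_pairs br A @ br a b # bracket_pairs br B"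
    using bracket_pairs_append[OF eA, of br "a # b # B"] by simp
  have pp: "parity_pairs (CA @ ca # cb # CB) = parity_pairs CA @ (ca \<noteq> cb) # parity_pairs CB"
    using parity_pairs_append[of CA "ca # cb # CB"] eA lA by simp
  have "psum (parity_pairs CA) = psum CA" using psum_parity_pairs[of CA] eA lA by simp
  then show ?thesis
    unfolding lie_term_def using lpA lpCA
    by (simp add: numeral_eq_Suc pb pp nth_append list_update_append)
qed

lemma lie_term_eq_jacobi_term_split:
  assumes mP: "multilin scale P" and sP: "supersym G0 G1 P"
    and h: "homlist G0 G1 (c0 # c1 # CA @ ca # cb # CB) (y0 # y1 # A @ a # b # B)"
    and lA: "length CA = length A" and lB: "length CB = length B"
    and eA: "even (length A)" and eB: "even (length B)"
  shows "lie_term P (Suc (length A div 2)) (c0 # c1 # CA @ ca # cb # CB) (y0 # y1 # A @ a # b # B)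
    = perm_act (front_perm (length A + 3)) (perm_act (front_perm (length A + 3)) (jacobi_term P))
        (c0 # c1 # CA @ ca # cb # CB) (y0 # y1 # A @ a # b # B)"
proof -
  let ?m = "length A + 3" and ?j = "Suc (length A div 2)"
  let ?J = "br y0 (br a b)" and ?Jp = "c0 \<noteq> (ca \<noteq> cb)"
  let ?L = "y1 # bracket_pairs br A @ ?J # bracket_pairs br B"
  let ?dL = "c1 # parity_pairs CA @ ?Jp # parity_pairs CB"
  have hy: "y0 \<in> gpart c0" "y1 \<in> gpart c1" "homlist G0 G1 CA A" "a \<in> gpart ca" "b \<in> gpart cb" "homlist G0 G1 CB B"
    using h lA by auto
  have lpA: "length (bracket_pairs br A) = length A div 2" by (rule length_bracket_pairs)
  have lpCA: "length (parity_pairs CA) = length A div 2" using length_parity_pairs[of CA] lA by simp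
  have psA: "psum (parity_pairs CA) = psum CA" using psum_parity_pairs[of CA] eA lA by simp
  have m: "?m = Suc (Suc (Suc (length A)))" by simp
  have "perm_act (front_perm ?m) (perm_act (front_perm ?m) (jacobi_term P)) (c0 # c1 # CA @ ca # cb # CB) (y0 # y1 # A @ a # b # B)
      = psgn (cb \<and> (c0 \<noteq> (c1 \<noteq> (psum CA \<noteq> ca)))) * (psgn (ca \<and> (cb \<noteq> (c0 \<noteq> (c1 \<noteq> psum CA)))) *
          (psgn ((ca \<noteq> cb) \<and> c0) * P (?J # y1 # bracket_pairs br A @ bracket_pairs br B)))"
    using perm_act_front_perm[of ?m "c0 # c1 # CA @ ca # cb # CB" "y0 # y1 # A @ a # b # B"]
      perm_act_front_perm[of ?m "cb # c0 # c1 # CA @ ca # CB" "b # y0 # y1 # A @ a # B"] lA lB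
    unfolding m by (simp add: nth_append jacobi_term_def numeral_eq_Suc bracket_pairs_append[OF eA])
  moreover have "lie_term P ?j (c0 # c1 # CA @ ca # cb # CB) (y0 # y1 # A @ a # b # B) = psgn (c0 \<and> (c1 \<noteq> psum CA)) * P ?L"
    by (rule lie_term_split[OF lA eA])
  moreover have "P ?L = psgn (?Jp \<and> (c1 \<noteq> psum CA)) * P (?J # y1 # bracket_pairs br A @ bracket_pairs br B)"
  proof -
    have hL: "homlist G0 G1 ?dL ?L"
      using hy bracket_gpart[OF hy(1) bracket_gpart[OF hy(4,5)]] homlist_bracket_pairs[OF hy(3)]
        homlist_bracket_pairs[OF hy(6)] lpA lpCA by simp
    have jL: "?j < length ?L" using lpA by simp
    have "eps (front_perm ?j) ?dL * P (permute_list (front_perm ?j) ?L) = P ?L"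
      using sP hL front_perm_permutes[OF jL] unfolding supersym_def by blast
    moreover have "eps (front_perm ?j) ?dL = psgn (?Jp \<and> (c1 \<noteq> psum CA))"
      using eps_front_perm[of ?j ?dL] lpCA psA by (simp add: nth_append)
    ultimately show ?thesis using permute_list_front_perm[OF jL] lpA by (simp add: nth_append)
  qed
  moreover have "psgn (c0 \<and> (c1 \<noteq> psum CA)) * (psgn (?Jp \<and> (c1 \<noteq> psum CA)) * X)
     = psgn (cb \<and> (c0 \<noteq> (c1 \<noteq> (psum CA \<noteq> ca)))) * (psgn (ca \<and> (cb \<noteq> (c0 \<noteq> (c1 \<noteq> psum CA)))) * (psgn ((ca \<noteq> cb) \<and> c0) * X))" for X
    by (cases c0; cases c1; cases ca; cases cb; cases "psum CA") simp_all
  ultimately show ?thesis by simp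
qed

lemma split_at_pair:
  assumes "2 * j + 2 \<le> length xs" "1 \<le> j"
  shows "\<exists>x0 x1 A a b B. xs = x0 # x1 # A @ a # b # B \<and> length A = 2 * j - 2"
proof -
  obtain x0 x1 r where xs: "xs = x0 # x1 # r"
    using assms(1) by (cases xs; cases "tl xs") auto
  have lr: "2 * j - 2 + 2 \<le> length r" using assms xs by simp
  then have "length (drop (2 * j - 2) r) \<ge> 2" by simp
  then obtain a b B where d: "drop (2 * j - 2) r = a # b # B"
    by (cases "drop (2 * j - 2) r"; cases "tl (drop (2 * j - 2) r)") auto
  then have "r = take (2 * j - 2) r @ a # b # B" by (metis append_take_drop_id)
  moreover have "length (take (2 * j - 2) r) = 2 * j - 2" using lr by simp
  ultimately show ?thesis using xs by blast
qed

lemma lie_term_eq_jacobi_term: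
  assumes P: "P \<in> Pforms scale G0 G1" and h: "homlist G0 G1 cs ys" and l: "length ys = 2 * k"
    and j: "1 \<le> j" "j < k"
  shows "lie_term P j cs ys = perm_act (front_perm (2 * j + 1)) (perm_act (front_perm (2 * j + 1)) (jacobi_term P)) cs ys"
proof -
  have mP: "multilin scale P" and sP: "supersym G0 G1 P" using P by (auto simp: Pforms_def)
  have lc: "length cs = 2 * k" using h l by (simp add: homlist_def)
  obtain y0 y1 A a b B where ys: "ys = y0 # y1 # A @ a # b # B" and lA: "length A = 2 * j - 2"
    using split_at_pair[of j ys] l j by auto
  obtain c0 c1 CA ca cb CB where cs: "cs = c0 # c1 # CA @ ca # cb # CB" and lCA: "length CA = 2 * j - 2"
    using split_at_pair[of j cs] lc j by auto
  have "length CB = length B" using l lc ys cs lA lCA by simp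
  moreover have "even (length B)" using l ys lA j by simp presburger
  moreover have "length A + 3 = 2 * j + 1" and "Suc (length A div 2) = j" using lA j by auto
  ultimately show ?thesis
    using lie_term_eq_jacobi_term_split[OF mP sP, of c0 c1 CA ca cb CB y0 y1 A a b B] h lA lCA
    unfolding ys cs by simp
qed

lemma bracket_pairs_invariance:
  assumes P: "P \<in> Pforms scale G0 G1"
    and L: "\<And>p X. X \<in> gpart p \<Longrightarrow> lieD G0 G1 br p X P = (\<lambda>_. 0)"
    and h: "homlist G0 G1 cs ys" and l: "length ys = 2 * k" and k: "1 \<le> k"
  shows "P (bracket_pairs br ys) = - (\<Sum>j\<in>{1..<k}. lie_term P j cs ys)"
proof -
  have mP: "multilin scale P" using P by (simp add: Pforms_def)
  have lc: "length cs = 2 * k" using h l by (simp add: homlist_def)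
  obtain y0 y1 r where ys: "ys = y0 # y1 # r" using l k by (cases ys; cases "tl ys") auto
  obtain c0 c1 cr where cs: "cs = c0 # c1 # cr" using lc k by (cases cs; cases "tl cs") auto
  have hy: "y0 \<in> gpart c0" "y1 \<in> gpart c1" "homlist G0 G1 cr r" using h ys cs by auto
  let ?ws = "y1 # bracket_pairs br r" and ?ds = "c1 # parity_pairs cr"
  have hw: "homlist G0 G1 ?ds ?ws" using hy(2) homlist_bracket_pairs[OF hy(3)] by simp
  have lw: "length ?ws = k" using l ys by (simp add: length_bracket_pairs)
  have "(\<Sum>j<length ?ws. psgn (c0 \<and> psum (take j ?ds)) * P (?ws[j := br y0 (?ws ! j)])) = 0"
    by (rule lie_invariance_homlist[OF L[OF hy(1)] mP hy(1) hw])
  then have z: "(\<Sum>j<k. lie_term P j cs ys) = 0" unfolding lw by (simp add: lie_term_def ys cs numeral_eq_Suc)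
  have "{..<k} = insert 0 {1..<k}" using k by auto
  then have "(\<Sum>j<k. lie_term P j cs ys) = lie_term P 0 cs ys + (\<Sum>j\<in>{1..<k}. lie_term P j cs ys)" by simp
  moreover have "lie_term P 0 cs ys = P (bracket_pairs br ys)" by (simp add: lie_term_def ys cs numeral_eq_Suc)
  ultimately show ?thesis using z by (simp add: eq_neg_iff_add_eq_0)
qed

lemma super_alt_bracket_pairs_eq_0:
  assumes P: "P \<in> Pforms scale G0 G1"
    and L: "\<And>p X. X \<in> gpart p \<Longrightarrow> lieD G0 G1 br p X P = (\<lambda>_. 0)"
    and h: "homlist G0 G1 bs xs" and l: "length xs = 2 * k" and k: "1 \<le> k"
  shows "super_alt (2 * k) (\<lambda>cs ys. P (bracket_pairs br ys)) bs xs = 0"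
proof -
  have mP: "multilin scale P" using P by (simp add: Pforms_def)
  have lb: "length bs = 2 * k" using h l by (simp add: homlist_def)
  have "super_alt (2 * k) (lie_term P j) bs xs = 0" if j: "1 \<le> j" "j < k" for j
  proof -
    let ?\<beta> = "front_perm (2 * j + 1)"
    have b: "?\<beta> permutes {..<2 * k}" using j by (intro front_perm_permutes) simp
    have "super_alt (2 * k) (lie_term P j) bs xs = super_alt (2 * k) (perm_act ?\<beta> (perm_act ?\<beta> (jacobi_term P))) bs xs"
      by (rule super_alt_cong[OF h l]) (rule lie_term_eq_jacobi_term[OF P _ _ j])
    also have "\<dots> = super_alt (2 * k) (jacobi_term P) bs xs"
      using super_alt_reindex[OF b lb l] by simp
    also have "\<dots> = 0" by (rule super_alt_jacobi_term_eq_0[OF mP h l]) (use j in simp)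
    finally show ?thesis .
  qed
  moreover have "super_alt (2 * k) (\<lambda>cs ys. P (bracket_pairs br ys)) bs xs
      = super_alt (2 * k) (\<lambda>cs ys. - (\<Sum>j\<in>{1..<k}. lie_term P j cs ys)) bs xs"
    by (rule super_alt_cong[OF h l]) (rule bracket_pairs_invariance[OF P L _ _ k])
  then have "super_alt (2 * k) (\<lambda>cs ys. P (bracket_pairs br ys)) bs xs
      = - (\<Sum>j\<in>{1..<k}. super_alt (2 * k) (lie_term P j) bs xs)"
    by (simp add: super_alt_minus super_alt_sum)
  ultimately show ?thesis by simp
qed

end

context lie_superalg_s_map
begin

lemma s_order_part_Isplus:
  assumes P: "P \<in> Isplus scale G0 G1 br"
  shows "s (order_part k P) = (\<lambda>_. 0)"
proof (rule multilin_eqI_homlist)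
  have PP: "P \<in> Pforms scale G0 G1" and L: "\<And>p X. X \<in> gpart p \<Longrightarrow> lieD G0 G1 br p X P = (\<lambda>_. 0)"
    and P0: "P [] = 0"
    using P by (auto simp: Isplus_def Is_def)
  show "multilin scale (s (order_part k P))" by (rule multilin_s[OF Pforms_order_part[OF PP]])
  show "multilin scale (\<lambda>_::'g list. 0::complex)" by (simp add: multilin_def)
  fix bs xs assume h: "homlist G0 G1 bs xs"
  have "s (order_part k P) xs = (if length xs = 2 * k then
      s_coeff k * super_alt (2 * k) (\<lambda>cs ys. order_part k P (bracket_pairs br ys)) bs xs else 0)"
    by (rule s_explicit[OF Pforms_order_part[OF PP] _ h]) (simp add: order_part_def)
  moreover have "super_alt (2 * k) (\<lambda>cs ys. P (bracket_pairs br ys)) bs xs = 0" if l: "length xs = 2 * k"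
  proof (cases "k = 0")
    case True
    then have "xs = []" "bs = []" using l h by (auto simp: homlist_def)
    then show ?thesis using True P0 by (simp add: super_alt_def permutes_lessThan_0)
  next
    case False
    then show ?thesis by (intro super_alt_bracket_pairs_eq_0[OF PP L h l]) auto
  qed
  moreover have "super_alt (2 * k) (\<lambda>cs ys. order_part k P (bracket_pairs br ys)) bs xs
      = super_alt (2 * k) (\<lambda>cs ys. P (bracket_pairs br ys)) bs xs" if l: "length xs = 2 * k"
    by (rule super_alt_cong[OF h l]) (simp add: order_part_def length_bracket_pairs)
  ultimately show "s (order_part k P) xs = 0" by simp
qed

end

theorem lemma3p4:
  fixes scale :: "complex \<Rightarrow> 'g::ab_group_add \<Rightarrow> 'g"
    and G0 G1 :: "'g set"
    and br :: "'g \<Rightarrow> 'g \<Rightarrow> 'g"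
    and s :: "('g list \<Rightarrow> complex) \<Rightarrow> ('g list \<Rightarrow> complex)"
    and P :: "'g list \<Rightarrow> complex"
  assumes "lie_superalgebra scale G0 G1 br"
    and "is_s_map scale G0 G1 br s"
    and "P \<in> Isplus scale G0 G1 br"
  shows "s P = (\<lambda>_. 0)"
proof -
  interpret lie_superalg_s_map scale G0 G1 br s
    using assms(1,2) by unfold_locales
  have P: "P \<in> Pforms scale G0 G1"
    using assms(3) by (simp add: Isplus_def Is_def)
  obtain N where N: "P = (\<lambda>xs. \<Sum>k\<in>{..N}. 1 * order_part k P xs)"
    by (rule sum_order_parts[OF P])
  have "s P = (\<lambda>xs. \<Sum>k\<in>{..N}. 1 * s (order_part k P) xs)"
    by (subst N, rule s_sum) (rule Pforms_order_part[OF P])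
  then show ?thesis
    using s_order_part_Isplus[OF assms(3)] by simp
qed

end
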